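(* Let $\mathbf{G}_0=(\mathbf{L}_0,\mathbf{H}_0)$ be a non-trivial partial-monitoring game in which Learner has $N=2$ actions and Nature has $M$ actions ($M\ge1$ arbitrary). Then there is a $2\times M$ bandit game $\mathbf{G}'$ with $\mathbf{G}_0\le\mathbf{G}'$. Consequently the minimax regret of $\mathbf{G}_0$ is $\Theta(\sqrt{T})$, i.e. there are constants $0<c\le C$ (depending on $\mathbf{G}_0$ but not on $T$) with $c\sqrt{T}\le R_T^*(\mathbf{G}_0)\le C\sqrt{T}$ for all $T\ge1$.
   Context: A partial-monitoring game $\mathbf{G}=(\mathbf{L},\mathbf{H})$ is given by two real $N\times M$ matrices: the loss matrix $\mathbf{L}=(\ell_{ij})$ (entries in $[0,1]$ for the games under study; in intermediate constructions arbitrary real entries are allowed) and the feedback matrix $\mathbf{H}=(h_{ij})$. Write $\underline{n}=\{1,\dots,n\}$. Nature (an oblivious adversary) fixes an outcome sequence $J_1,J_2,\ldots\in\underline{M}$ in advance, hidden from Learner. At each time $t$, Learner chooses (possibly at random) an action $I_t\in\underline{N}$, as a function of his own internal randomization and the past feedbacks $h_{I_1,J_1},\dots,h_{I_{t-1},J_{t-1}}$; he then observes $h_{I_t,J_t}$ and suffers (without observing it) loss $\ell_{I_t,J_t}$. Such a rule is a strategy (algorithm) $\mathcal{A}$. The regret is $R_T(\mathcal{A},\mathbf{G})=\mathbb{E}\big[\sum_{t=1}^T\ell_{I_t,J_t}-\min_{i\in\underline{N}}\sum_{t=1}^T\ell_{i,J_t}\big]$, the minimax regret is $R_T^*(\mathbf{G})=\inf_{\mathcal{A}}\sup_{(J_1,\dots,J_T)\in\underline{M}^T}R_T(\mathcal{A},\mathbf{G})$.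 A game is trivial if either $R_T^*(\mathbf{G})=0$ for all $T$, or there is $c>0$ with $R_T^*(\mathbf{G})\ge cT$ for all $T$ (minimax regret is zero or grows linearly); otherwise non-trivial. A bandit game is a game with $\mathbf{H}=\mathbf{L}$. For two $N\times M$ games, $\mathbf{G}'\le\mathbf{G}$ ("$\mathbf{G}'$ is easier than $\mathbf{G}$") means: for every algorithm $\mathcal{A}$ there is an algorithm $\mathcal{A}'$ such that, for every outcome sequence, $\mathcal{A}'$ played on $\mathbf{G}'$ chooses the same action sequence as $\mathcal{A}$ played on $\mathbf{G}$, and $R_T(\mathcal{A}',\mathbf{G}')\le R_T(\mathcal{A},\mathbf{G})$. *)

theory Defs
  imports "HOL-Probability.Probability"
begin

text \<open>Games are given by an N x M loss matrix L and feedback matrix H, represented as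
functions nat => nat => real; Learner's actions are 0..<N, Nature's outcomes 0..<M
(0-based indexing of the paper's 1..N, 1..M).
A (randomized) strategy of Learner is a behaviour strategy: given the history of his
own past actions and observed feedbacks, it returns a distribution over actions.\<close>

type_synonym strategy = "(nat \<times> real) list \<Rightarrow> nat pmf"

definition valid_strategy :: "nat \<Rightarrow> strategy \<Rightarrow> bool" where
  "valid_strategy N \<sigma> \<longleftrightarrow> (\<forall>h. set_pmf (\<sigma> h) \<subseteq> {..<N})"

definition valid_outcomes :: "nat \<Rightarrow> (nat \<Rightarrow> nat) \<Rightarrow> bool" where
  "valid_outcomes M J \<longleftrightarrow> (\<forall>t. J t < M)"

fun hist :: "(nat \<Rightarrow> nat \<Rightarrow> real) \<Rightarrow> strategy \<Rightarrow> (nat \<Rightarrow> nat) \<Rightarrow> nat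
             \<Rightarrow> (nat \<times> real) list pmf" where
  "hist H \<sigma> J 0 = return_pmf []"
| "hist H \<sigma> J (Suc t) =
     bind_pmf (hist H \<sigma> J t) (\<lambda>h. map_pmf (\<lambda>i. h @ [(i, H i (J t))]) (\<sigma> h))"

definition actions :: "(nat \<Rightarrow> nat \<Rightarrow> real) \<Rightarrow> strategy \<Rightarrow> (nat \<Rightarrow> nat) \<Rightarrow> nat
             \<Rightarrow> nat list pmf" where
  "actions H \<sigma> J T = map_pmf (map fst) (hist H \<sigma> J T)"

definition regret :: "nat \<Rightarrow> (nat \<Rightarrow> nat \<Rightarrow> real) \<Rightarrow> (nat \<Rightarrow> nat \<Rightarrow> real) \<Rightarrow> strategy
             \<Rightarrow> (nat \<Rightarrow> nat) \<Rightarrow> nat \<Rightarrow> real" where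
  "regret N L H \<sigma> J T =
     measure_pmf.expectation (hist H \<sigma> J T) (\<lambda>h. \<Sum>t<T. L (fst (h ! t)) (J t))
     - Min ((\<lambda>i. \<Sum>t<T. L i (J t)) ` {..<N})"

definition minimax_regret :: "nat \<Rightarrow> nat \<Rightarrow> (nat \<Rightarrow> nat \<Rightarrow> real) \<Rightarrow> (nat \<Rightarrow> nat \<Rightarrow> real)
             \<Rightarrow> nat \<Rightarrow> real" where
  "minimax_regret N M L H T =
     Inf ((\<lambda>\<sigma>. Sup ((\<lambda>J. regret N L H \<sigma> J T) ` {J. valid_outcomes M J}))
          ` {\<sigma>. valid_strategy N \<sigma>})"

definition trivial_game :: "nat \<Rightarrow> nat \<Rightarrow> (nat \<Rightarrow> nat \<Rightarrow> real) \<Rightarrow> (nat \<Rightarrow> nat \<Rightarrow> real) \<Rightarrow> bool" where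
  "trivial_game N M L H \<longleftrightarrow>
     (\<forall>T. minimax_regret N M L H T = 0)
     \<or> (\<exists>c>0. \<forall>T\<ge>1. minimax_regret N M L H T \<ge> c * real T)"

definition easier :: "nat \<Rightarrow> nat \<Rightarrow> (nat \<Rightarrow> nat \<Rightarrow> real) \<Rightarrow> (nat \<Rightarrow> nat \<Rightarrow> real)
             \<Rightarrow> (nat \<Rightarrow> nat \<Rightarrow> real) \<Rightarrow> (nat \<Rightarrow> nat \<Rightarrow> real) \<Rightarrow> bool" where
  "easier N M L' H' L H \<longleftrightarrow>
     (\<forall>\<sigma>. valid_strategy N \<sigma> \<longrightarrow>
        (\<exists>\<sigma>'. valid_strategy N \<sigma>' \<and>
           (\<forall>J. valid_outcomes M J \<longrightarrow>
              (\<forall>T. actions H' \<sigma>' J T = actions H \<sigma> J T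
                   \<and> regret N L' H' \<sigma>' J T \<le> regret N L H \<sigma> J T))))"

end

theory Submission
  imports Defs "HOL-Library.Function_Algebras"
begin

text \<open>
  Let (L, H) be non-trivial with losses in [0,1] and gap d = L 0 - L 1.
  (1) d takes both signs: if one action were never worse, playing it would have no regret.
  (2) d is observable, d j = f (H 0 j) + g (H 1 j). Otherwise a separating functional gives
      two outcome distributions with identical feedback laws but mean gaps +eps and -eps;
      against i.i.d. outcomes from them no strategy can avoid regret eps T / 2.
  (3) Hence L i j = phi i (H i j) - c j with bounded phi >= 0, so the bandit game with
      losses phi i (H i j) is harder, and exponential weights on importance-weighted
      estimates have regret at most 2 B sqrt T.
  (4) Against i.i.d. outcomes from a two-point distribution on which d has mean zero, every
      strategy has expected regret E |D_T| / 2 for a centred random walk D_T, and a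
      fourth-moment bound gives E |D_T| >= c sqrt T.
\<close>

section \<open>Expectations of finitely supported distributions\<close>

text \<open>All distributions below have finite support, so expectations are finite sums.\<close>

abbreviation E :: "'a pmf \<Rightarrow> ('a \<Rightarrow> real) \<Rightarrow> real" where
  "E p f \<equiv> measure_pmf.expectation p f"

lemma expect_bind:
  assumes "finite (set_pmf p)" "\<And>x. x \<in> set_pmf p \<Longrightarrow> finite (set_pmf (f x))"
  shows "E (bind_pmf p f) h = E p (\<lambda>x. E (f x) h)"
proof -
  have "E (bind_pmf p f) h = (\<Sum>a\<in>set_pmf p. pmf p a *\<^sub>R E (f a) h)"
    by (rule pmf_expectation_bind) (use assms in auto)
  also have "\<dots> = E p (\<lambda>x. E (f x) h)"
    by (subst integral_measure_pmf[of "set_pmf p"]) (use assms in auto)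
  finally show ?thesis .
qed

lemma expect_mono:
  assumes "finite (set_pmf p)" "\<And>x. x \<in> set_pmf p \<Longrightarrow> f x \<le> g x"
  shows "E p f \<le> E p g"
  by (rule integral_mono_AE)
    (use assms in \<open>auto simp: integrable_measure_pmf_finite AE_measure_pmf_iff\<close>)

lemma expect_le_const:
  assumes "finite (set_pmf p)" "\<And>x. x \<in> set_pmf p \<Longrightarrow> f x \<le> c"
  shows "E p f \<le> c"
  using expect_mono[of p f "\<lambda>_. c"] assms by simp

lemma expect_ge_const:
  assumes "finite (set_pmf p)" "\<And>x. x \<in> set_pmf p \<Longrightarrow> c \<le> f x"
  shows "c \<le> E p f"
  using expect_mono[of p "\<lambda>_. c" f] assms by simp

lemma expect_cong:
  assumes "\<And>x. x \<in> set_pmf p \<Longrightarrow> f x = g x"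
  shows "E p f = E p g"
  by (rule integral_cong_AE) (use assms in \<open>auto simp: AE_measure_pmf_iff\<close>)

lemma expect_add:
  "finite (set_pmf p) \<Longrightarrow> E p (\<lambda>x. f x + g x) = E p f + E p g"
  by (rule Bochner_Integration.integral_add) (auto simp: integrable_measure_pmf_finite)

lemma expect_diff:
  "finite (set_pmf p) \<Longrightarrow> E p (\<lambda>x. f x - g x) = E p f - E p g"
  by (rule Bochner_Integration.integral_diff) (auto simp: integrable_measure_pmf_finite)

lemma expect_add_const: "finite (set_pmf p) \<Longrightarrow> E p (\<lambda>x. c + f x) = c + E p f"
  by (subst expect_add) auto

lemma expect_on_range:
  fixes q :: "nat pmf"
  assumes "set_pmf q \<subseteq> {..<M}"
  shows "E q g = (\<Sum>j<M. pmf q j * g j)"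
proof -
  have "E q g = (\<Sum>j<M. g j * pmf q j)"
    by (rule integral_measure_pmf_real) (use assms in auto)
  then show ?thesis by (simp add: mult.commute)
qed

lemma pmf_map_on_range:
  fixes q :: "nat pmf"
  assumes "set_pmf q \<subseteq> {..<M}"
  shows "pmf (map_pmf f q) s = (\<Sum>j\<in>{j. j<M \<and> f j = s}. pmf q j)"
proof -
  have "pmf (map_pmf f q) s = measure q (f -` {s} \<inter> set_pmf q)"
    by (simp add: pmf_map measure_Int_set_pmf)
  also have "f -` {s} \<inter> set_pmf q = (f -` {s} \<inter> {..<M}) \<inter> set_pmf q"
    using assms by auto
  also have "measure q \<dots> = sum (pmf q) (f -` {s} \<inter> {..<M})"
    by (simp add: measure_Int_set_pmf measure_measure_pmf_finite)
  also have "f -` {s} \<inter> {..<M} = {j. j<M \<and> f j = s}" by auto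
  finally show ?thesis .
qed

lemma pmf_from_weights:
  fixes M :: nat and qf :: "nat \<Rightarrow> real"
  assumes "\<forall>j<M. qf j \<ge> 0" "(\<Sum>j<M. qf j) = 1"
  shows "\<exists>q. set_pmf q \<subseteq> {..<M} \<and> (\<forall>j<M. pmf q j = qf j)"
proof -
  define xs where "xs = map (\<lambda>j. (j, qf j)) [0..<M]"
  have "sum_list (map snd xs) = (\<Sum>j<M. qf j)"
    unfolding xs_def by (simp add: interv_sum_list_conv_sum_set_nat atLeast0LessThan o_def)
  then have wf: "pmf_of_list_wf xs"
    unfolding pmf_of_list_wf_def using assms by (auto simp: xs_def)
  have "pmf (pmf_of_list xs) j = qf j" if "j < M" for j
  proof -
    have "pmf (pmf_of_list xs) j = sum_list (map snd (filter (\<lambda>z. fst z = j) xs))"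
      by (rule pmf_pmf_of_list[OF wf])
    also have "\<dots> = sum_list (map qf (filter (\<lambda>i. i = j) [0..<M]))"
      unfolding xs_def by (simp add: filter_map o_def)
    also have "\<dots> = sum qf (set (filter (\<lambda>i. i = j) [0..<M]))"
      by (rule sum_list_distinct_conv_sum_set) simp
    also have "set (filter (\<lambda>i. i = j) [0..<M]) = {j}" using that by auto
    finally show ?thesis by simp
  qed
  moreover have "set_pmf (pmf_of_list xs) \<subseteq> {..<M}"
    using set_pmf_of_list[OF wf] by (auto simp: xs_def)
  ultimately show ?thesis by blast
qed

definition two_point :: "real \<Rightarrow> nat \<Rightarrow> nat \<Rightarrow> nat pmf" where
  "two_point r a b = map_pmf (\<lambda>x. if x then a else b) (bernoulli_pmf r)"

lemma two_point_expect:
  assumes "0 \<le> r" "r \<le> 1"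
  shows "E (two_point r a b) g = r * g a + (1 - r) * g b"
proof -
  have "E (two_point r a b) g = E (bernoulli_pmf r) (\<lambda>x. g (if x then a else b))"
    by (simp add: two_point_def)
  also have "\<dots> = (\<Sum>x\<in>{True,False}. g (if x then a else b) * pmf (bernoulli_pmf r) x)"
    by (rule integral_measure_pmf_real) auto
  finally show ?thesis using assms by simp
qed

lemma two_point_support: "set_pmf (two_point r a b) \<subseteq> {a,b}"
  by (auto simp: two_point_def)

lemma two_point_finite: "finite (set_pmf (two_point r a b))"
  using two_point_support by (rule finite_subset) simp

section \<open>Histories of play\<close>

lemma strategy_finite: "valid_strategy N \<sigma> \<Longrightarrow> finite (set_pmf (\<sigma> h))"
  unfolding valid_strategy_def by (meson finite_lessThan finite_subset)

lemma hist_finite: "valid_strategy N \<sigma> \<Longrightarrow> finite (set_pmf (hist H \<sigma> J T))"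
  by (induction T) (auto simp: strategy_finite)

lemma hist_support:
  assumes "\<forall>h. set_pmf (\<sigma> h) \<subseteq> A" and "h \<in> set_pmf (hist H \<sigma> J T)"
  shows "length h = T \<and> (\<forall>t<T. fst (h!t) \<in> A \<and> snd (h!t) = H (fst (h!t)) (J t))"
  using assms(2)
proof (induction T arbitrary: h)
  case 0 then show ?case by simp
next
  case (Suc T)
  then obtain h' i where h': "h' \<in> set_pmf (hist H \<sigma> J T)" "i \<in> set_pmf (\<sigma> h')"
    and h: "h = h' @ [(i, H i (J T))]" by auto
  have "i \<in> A" using h' assms(1) by auto
  with Suc.IH[OF h'(1)] show ?case
    by (auto simp: h nth_append less_Suc_eq)
qed

corollary valid_hist_support:
  assumes "valid_strategy N \<sigma>" "h \<in> set_pmf (hist H \<sigma> J T)"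
  shows "length h = T \<and> (\<forall>t<T. fst (h!t) < N \<and> snd (h!t) = H (fst (h!t)) (J t))"
  using hist_support[of \<sigma> "{..<N}"] assms unfolding valid_strategy_def by auto

lemma hist_expect_Suc:
  assumes "valid_strategy N \<sigma>"
  shows "E (hist H \<sigma> J (Suc T)) F =
         E (hist H \<sigma> J T) (\<lambda>h. E (\<sigma> h) (\<lambda>i. F (h @ [(i, H i (J T))])))"
  by (simp only: hist.simps, subst expect_bind)
    (auto simp: hist_finite[OF assms] strategy_finite[OF assms])

lemma hist_cong: "(\<And>t. t < T \<Longrightarrow> J t = J' t) \<Longrightarrow> hist H \<sigma> J T = hist H \<sigma> J' T"
  by (induction T) auto

lemma two_action_expect:
  assumes "valid_strategy 2 \<sigma>"
  shows "E (\<sigma> h) g = pmf (\<sigma> h) 0 * g 0 + (1 - pmf (\<sigma> h) 0) * g 1"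
proof -
  have sub: "set_pmf (\<sigma> h) \<subseteq> {0,1}"
  proof
    fix x assume "x \<in> set_pmf (\<sigma> h)"
    then have "x < 2" using assms unfolding valid_strategy_def by blast
    then show "x \<in> {0,1}" by auto
  qed
  have "sum (pmf (\<sigma> h)) {0,1} = 1"
    by (rule sum_pmf_eq_1) (use sub in auto)
  then have p1: "pmf (\<sigma> h) 1 = 1 - pmf (\<sigma> h) 0" by simp
  have "E (\<sigma> h) g = (\<Sum>a\<in>{0,1}. g a * pmf (\<sigma> h) a)"
    by (rule integral_measure_pmf_real) (use sub in auto)
  also have "\<dots> = g 0 * pmf (\<sigma> h) 0 + g 1 * pmf (\<sigma> h) 1" by simp
  finally show ?thesis unfolding p1 by (simp add: algebra_simps)
qed

lemma Min_two: "Min (f ` {..<2::nat}) = min (f 0) (f 1)"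
proof -
  have "{..<2::nat} = {0,1}" by auto
  then show ?thesis by simp
qed

section \<open>Worst-case and minimax regret\<close>

abbreviation worst_regret ::
  "nat \<Rightarrow> (nat \<Rightarrow> nat \<Rightarrow> real) \<Rightarrow> (nat \<Rightarrow> nat \<Rightarrow> real) \<Rightarrow> nat \<Rightarrow> strategy \<Rightarrow> real" where
  "worst_regret M L H T \<sigma> \<equiv> Sup ((\<lambda>J. regret 2 L H \<sigma> J T) ` {J. valid_outcomes M J})"

abbreviation loss_bounded :: "nat \<Rightarrow> (nat \<Rightarrow> nat \<Rightarrow> real) \<Rightarrow> bool" where
  "loss_bounded M L \<equiv> \<forall>i<2. \<forall>j<M. 0 \<le> L i j \<and> L i j \<le> 1"

lemma regret_le_horizon:
  assumes "valid_strategy 2 \<sigma>" "valid_outcomes M J" "loss_bounded M L"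
  shows "regret 2 L H \<sigma> J T \<le> T"
proof -
  have "E (hist H \<sigma> J T) (\<lambda>h. \<Sum>t<T. L (fst (h ! t)) (J t)) \<le> T"
  proof (rule expect_le_const[OF hist_finite[OF assms(1)]])
    fix h assume "h \<in> set_pmf (hist H \<sigma> J T)"
    then have "\<forall>t<T. fst (h!t) < 2" using valid_hist_support[OF assms(1)] by blast
    then have "(\<Sum>t<T. L (fst (h ! t)) (J t)) \<le> (\<Sum>t<T. 1)"
      using assms(2,3) unfolding valid_outcomes_def by (intro sum_mono) auto
    then show "(\<Sum>t<T. L (fst (h ! t)) (J t)) \<le> T" by simp
  qed
  moreover have "0 \<le> (\<Sum>t<T. L i (J t))" if "i < 2" for i
    using assms(2,3) that unfolding valid_outcomes_def by (intro sum_nonneg) auto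
  then have "0 \<le> min (\<Sum>t<T. L 0 (J t)) (\<Sum>t<T. L 1 (J t))" by simp
  ultimately show ?thesis unfolding regret_def Min_two by linarith
qed

lemma regret_constant_outcome_nonneg:
  assumes "valid_strategy 2 \<sigma>"
  shows "0 \<le> regret 2 L H \<sigma> (\<lambda>_. j) T"
proof -
  have "(\<Sum>t<T. min (L 0 j) (L 1 j)) \<le> E (hist H \<sigma> (\<lambda>_. j) T) (\<lambda>h. \<Sum>t<T. L (fst (h ! t)) j)"
  proof (rule expect_ge_const[OF hist_finite[OF assms]])
    fix h assume "h \<in> set_pmf (hist H \<sigma> (\<lambda>_. j) T)"
    then have "\<forall>t<T. fst (h!t) < 2" using valid_hist_support[OF assms] by blast
    then show "(\<Sum>t<T. min (L 0 j) (L 1 j)) \<le> (\<Sum>t<T. L (fst (h ! t)) j)"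
      by (intro sum_mono) (auto simp: less_2_cases_iff)
  qed
  then show ?thesis unfolding regret_def Min_two by (simp add: min_mult_distrib_left)
qed

lemma worst_regret_bdd_above:
  assumes "valid_strategy 2 \<sigma>" "loss_bounded M L"
  shows "bdd_above ((\<lambda>J. regret 2 L H \<sigma> J T) ` {J. valid_outcomes M J})"
  using regret_le_horizon[OF assms(1) _ assms(2)] by (intro bdd_aboveI[of _ "real T"]) auto

lemma regret_le_worst:
  assumes "valid_strategy 2 \<sigma>" "loss_bounded M L" "valid_outcomes M J"
  shows "regret 2 L H \<sigma> J T \<le> worst_regret M L H T \<sigma>"
  by (rule cSup_upper) (use assms worst_regret_bdd_above[OF assms(1,2)] in auto)

lemma worst_regret_nonneg:
  assumes "valid_strategy 2 \<sigma>" "loss_bounded M L" "M \<ge> 1"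
  shows "0 \<le> worst_regret M L H T \<sigma>"
proof -
  have "valid_outcomes M (\<lambda>_. 0)" using assms(3) by (simp add: valid_outcomes_def)
  then show ?thesis
    using regret_le_worst[OF assms(1,2)] regret_constant_outcome_nonneg[OF assms(1)]
    by (meson order_trans)
qed

lemma le_minimax_regretI:
  assumes "\<And>\<sigma>. valid_strategy 2 \<sigma> \<Longrightarrow> x \<le> worst_regret M L H T \<sigma>"
  shows "x \<le> minimax_regret 2 M L H T"
  unfolding minimax_regret_def
proof (rule cInf_greatest)
  have "valid_strategy 2 (\<lambda>_. return_pmf 0)" by (simp add: valid_strategy_def)
  then show "(\<lambda>\<sigma>. worst_regret M L H T \<sigma>) ` {\<sigma>. valid_strategy 2 \<sigma>} \<noteq> {}" by blast
qed (use assms in auto)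

lemma minimax_regret_le_worst:
  assumes "valid_strategy 2 \<sigma>" "loss_bounded M L" "M \<ge> 1"
  shows "minimax_regret 2 M L H T \<le> worst_regret M L H T \<sigma>"
  unfolding minimax_regret_def
  by (rule cInf_lower)
    (use assms worst_regret_nonneg[OF _ assms(2,3)] in \<open>auto intro!: bdd_belowI\<close>)

section \<open>Nature playing independent identically distributed outcomes\<close>

fun iid_seq :: "nat pmf \<Rightarrow> nat \<Rightarrow> nat list pmf" where
  "iid_seq q 0 = return_pmf []"
| "iid_seq q (Suc T) = bind_pmf (iid_seq q T) (\<lambda>xs. map_pmf (\<lambda>j. xs @ [j]) q)"

text \<open>An outcome list read as an outcome sequence (padded with outcome 0).\<close>

definition outcome_fun :: "nat list \<Rightarrow> nat \<Rightarrow> nat" where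
  "outcome_fun xs t = (if t < length xs then xs!t else 0)"

fun joint_hist :: "(nat \<Rightarrow> nat \<Rightarrow> real) \<Rightarrow> strategy \<Rightarrow> nat pmf \<Rightarrow> nat
                   \<Rightarrow> ((nat \<times> real) list \<times> nat list) pmf" where
  "joint_hist H \<sigma> q 0 = return_pmf ([],[])"
| "joint_hist H \<sigma> q (Suc T) = bind_pmf (joint_hist H \<sigma> q T)
     (\<lambda>p. bind_pmf (\<sigma> (fst p)) (\<lambda>i. map_pmf (\<lambda>j. (fst p @ [(i, H i j)], snd p @ [j])) q))"

lemma iid_seq_finite: "finite (set_pmf q) \<Longrightarrow> finite (set_pmf (iid_seq q T))"
  by (induction T) auto

lemma iid_seq_support: "xs \<in> set_pmf (iid_seq q T) \<Longrightarrow> length xs = T \<and> set xs \<subseteq> set_pmf q"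
  by (induction T arbitrary: xs) fastforce+

lemma iid_seq_expect_Suc:
  "finite (set_pmf q) \<Longrightarrow>
   E (iid_seq q (Suc T)) F = E (iid_seq q T) (\<lambda>xs. E q (\<lambda>j. F (xs @ [j])))"
  by (simp only: iid_seq.simps, subst expect_bind) (auto simp: iid_seq_finite)

lemma expect_iid_sum:
  assumes "finite (set_pmf q)"
  shows "E (iid_seq q T) (\<lambda>xs. sum_list (map f xs)) = T * E q f"
proof (induction T)
  case 0 then show ?case by simp
next
  case (Suc T)
  have "E (iid_seq q (Suc T)) (\<lambda>xs. sum_list (map f xs)) =
        E (iid_seq q T) (\<lambda>xs. sum_list (map f xs) + E q f)"
    by (subst iid_seq_expect_Suc[OF assms]) (simp add: expect_add_const assms)
  also have "\<dots> = E (iid_seq q T) (\<lambda>xs. sum_list (map f xs)) + E q f"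
    by (simp add: expect_add iid_seq_finite[OF assms])
  finally show ?case using Suc by (simp add: algebra_simps)
qed

lemma outcome_fun_valid:
  assumes "set xs \<subseteq> {..<M}" "M \<ge> 1"
  shows "valid_outcomes M (outcome_fun xs)"
  using assms unfolding valid_outcomes_def outcome_fun_def by (auto simp: subset_iff)

lemma joint_hist_finite:
  "valid_strategy N \<sigma> \<Longrightarrow> finite (set_pmf q) \<Longrightarrow> finite (set_pmf (joint_hist H \<sigma> q T))"
  by (induction T) (auto simp: strategy_finite)

lemma joint_hist_support:
  "p \<in> set_pmf (joint_hist H \<sigma> q T) \<Longrightarrow> length (fst p) = T \<and> length (snd p) = T"
  by (induction T arbitrary: p) auto

lemma joint_hist_expect_Suc:
  assumes "valid_strategy N \<sigma>" "finite (set_pmf q)"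
  shows "E (joint_hist H \<sigma> q (Suc T)) F = E (joint_hist H \<sigma> q T)
           (\<lambda>p. E (\<sigma> (fst p)) (\<lambda>i. E q (\<lambda>j. F (fst p @ [(i, H i j)], snd p @ [j]))))"
proof -
  have "E (joint_hist H \<sigma> q (Suc T)) F = E (joint_hist H \<sigma> q T)
     (\<lambda>p. E (bind_pmf (\<sigma> (fst p)) (\<lambda>i. map_pmf (\<lambda>j. (fst p @ [(i, H i j)], snd p @ [j])) q)) F)"
    by (simp only: joint_hist.simps, rule expect_bind)
      (auto simp: joint_hist_finite[OF assms] strategy_finite[OF assms(1)] assms(2))
  also have "\<dots> = E (joint_hist H \<sigma> q T)
           (\<lambda>p. E (\<sigma> (fst p)) (\<lambda>i. E q (\<lambda>j. F (fst p @ [(i, H i j)], snd p @ [j]))))"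
    by (rule expect_cong, subst expect_bind) (auto simp: strategy_finite[OF assms(1)] assms(2))
  finally show ?thesis .
qed

lemma joint_hist_eq:
  "joint_hist H \<sigma> q T =
   bind_pmf (iid_seq q T) (\<lambda>xs. map_pmf (\<lambda>h. (h,xs)) (hist H \<sigma> (outcome_fun xs) T))"
proof (induction T)
  case 0 then show ?case by (simp add: bind_return_pmf)
next
  case (Suc T)
  have step: "map_pmf (\<lambda>h. (h, xs @ [j])) (hist H \<sigma> (outcome_fun (xs @ [j])) (Suc T)) =
      bind_pmf (hist H \<sigma> (outcome_fun xs) T)
        (\<lambda>h. bind_pmf (\<sigma> h) (\<lambda>i. return_pmf (h @ [(i, H i j)], xs @ [j])))"
    if "xs \<in> set_pmf (iid_seq q T)" for xs j
  proof -
    have len: "length xs = T" using that iid_seq_support by blast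
    have "hist H \<sigma> (outcome_fun (xs @ [j])) T = hist H \<sigma> (outcome_fun xs) T"
      by (rule hist_cong) (auto simp: outcome_fun_def nth_append len)
    moreover have "outcome_fun (xs @ [j]) T = j" by (simp add: outcome_fun_def len[symmetric])
    ultimately show ?thesis by (simp add: bind_assoc_pmf bind_return_pmf map_pmf_def)
  qed
  have "bind_pmf (iid_seq q (Suc T))
          (\<lambda>xs. map_pmf (\<lambda>h. (h,xs)) (hist H \<sigma> (outcome_fun xs) (Suc T))) =
        bind_pmf (iid_seq q T) (\<lambda>xs. bind_pmf q (\<lambda>j.
          map_pmf (\<lambda>h. (h, xs @ [j])) (hist H \<sigma> (outcome_fun (xs @ [j])) (Suc T))))"
    by (simp add: bind_assoc_pmf bind_return_pmf map_pmf_def)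
  also have "\<dots> = bind_pmf (iid_seq q T) (\<lambda>xs. bind_pmf q (\<lambda>j.
          bind_pmf (hist H \<sigma> (outcome_fun xs) T)
            (\<lambda>h. bind_pmf (\<sigma> h) (\<lambda>i. return_pmf (h @ [(i, H i j)], xs @ [j])))))"
    by (intro bind_pmf_cong refl) (rule step)
  also have "\<dots> = bind_pmf (iid_seq q T) (\<lambda>xs. bind_pmf (hist H \<sigma> (outcome_fun xs) T)
          (\<lambda>h. bind_pmf (\<sigma> h) (\<lambda>i. bind_pmf q (\<lambda>j. return_pmf (h @ [(i, H i j)], xs @ [j])))))"
    by (intro bind_pmf_cong refl) (subst bind_commute_pmf, rule bind_commute_pmf)
  also have "\<dots> = joint_hist H \<sigma> q (Suc T)"
    by (simp add: Suc bind_assoc_pmf bind_return_pmf map_pmf_def)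
  finally show ?case ..
qed

definition plays0 :: "(nat \<Rightarrow> nat \<Rightarrow> real) \<Rightarrow> strategy \<Rightarrow> nat pmf \<Rightarrow> nat \<Rightarrow> real" where
  "plays0 H \<sigma> q T = (\<Sum>t<T. E (map_pmf fst (joint_hist H \<sigma> q t)) (\<lambda>h. pmf (\<sigma> h) 0))"

definition joint_loss ::
  "(nat \<Rightarrow> nat \<Rightarrow> real) \<Rightarrow> nat \<Rightarrow> (nat \<times> real) list \<times> nat list \<Rightarrow> real" where
  "joint_loss L T p = (\<Sum>t<T. L (fst (fst p ! t)) (snd p ! t))"

text \<open>Against i.i.d. outcomes, Learner's expected loss in each round is the mean loss of
  the action he picks, so his total expected loss is linear in the number of plays of 0.\<close>

lemma expected_joint_loss:
  assumes "valid_strategy 2 \<sigma>" "finite (set_pmf q)"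
  shows "E (joint_hist H \<sigma> q T) (joint_loss L T) =
         T * E q (L 1) + (E q (L 0) - E q (L 1)) * plays0 H \<sigma> q T"
proof (induction T)
  case 0 then show ?case by (simp add: joint_loss_def plays0_def)
next
  case (Suc T)
  let ?J = "joint_hist H \<sigma> q T"
  have round: "E (\<sigma> h) (\<lambda>i. E q (L i)) = E q (L 1) + (E q (L 0) - E q (L 1)) * pmf (\<sigma> h) 0"
    for h by (simp add: two_action_expect[OF assms(1)] algebra_simps)
  have "E (joint_hist H \<sigma> q (Suc T)) (joint_loss L (Suc T)) =
        E ?J (\<lambda>p. joint_loss L T p + (E q (L 1) + (E q (L 0) - E q (L 1)) * pmf (\<sigma> (fst p)) 0))"
    unfolding joint_hist_expect_Suc[OF assms]
  proof (rule expect_cong)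
    fix p assume "p \<in> set_pmf ?J"
    then have l: "length (fst p) = T" "length (snd p) = T" using joint_hist_support by auto
    have "joint_loss L (Suc T) (fst p @ [(i, H i j)], snd p @ [j]) = joint_loss L T p + L i j"
      for i j unfolding joint_loss_def using l by (simp add: nth_append)
    then show "E (\<sigma> (fst p)) (\<lambda>i. E q (\<lambda>j. joint_loss L (Suc T) (fst p @ [(i, H i j)], snd p @ [j])))
        = joint_loss L T p + (E q (L 1) + (E q (L 0) - E q (L 1)) * pmf (\<sigma> (fst p)) 0)"
      by (simp add: expect_add_const assms(2) strategy_finite[OF assms(1)] round)
  qed
  also have "\<dots> = E ?J (joint_loss L T) + E q (L 1)
                  + (E q (L 0) - E q (L 1)) * E ?J (\<lambda>p. pmf (\<sigma> (fst p)) 0)"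
    by (simp add: expect_add expect_add_const joint_hist_finite[OF assms])
  finally show ?case using Suc by (simp add: plays0_def algebra_simps)
qed

lemma expected_regret_iid:
  assumes "valid_strategy 2 \<sigma>" "finite (set_pmf q)"
  shows "E (iid_seq q T) (\<lambda>xs. regret 2 L H \<sigma> (outcome_fun xs) T) =
         T * E q (L 1) + (E q (L 0) - E q (L 1)) * plays0 H \<sigma> q T
         - E (iid_seq q T) (\<lambda>xs. min (sum_list (map (L 0) xs)) (sum_list (map (L 1) xs)))"
proof -
  let ?best = "\<lambda>xs. min (sum_list (map (L 0) xs)) (sum_list (map (L 1) xs))"
  have "E (iid_seq q T) (\<lambda>xs. regret 2 L H \<sigma> (outcome_fun xs) T) =
        E (iid_seq q T) (\<lambda>xs. E (hist H \<sigma> (outcome_fun xs) T) (\<lambda>h. joint_loss L T (h,xs)) - ?best xs)"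
  proof (rule expect_cong)
    fix xs assume "xs \<in> set_pmf (iid_seq q T)"
    then have l: "length xs = T" using iid_seq_support by blast
    have "(\<Sum>t<T. L i (outcome_fun xs t)) = sum_list (map (L i) xs)" for i
      by (simp add: sum_list_sum_nth atLeast0LessThan l outcome_fun_def)
    moreover have "joint_loss L T (h,xs) = (\<Sum>t<T. L (fst (h ! t)) (outcome_fun xs t))" for h
      by (simp add: joint_loss_def outcome_fun_def l)
    ultimately show "regret 2 L H \<sigma> (outcome_fun xs) T =
        E (hist H \<sigma> (outcome_fun xs) T) (\<lambda>h. joint_loss L T (h,xs)) - ?best xs"
      unfolding regret_def Min_two by simp
  qed
  also have "\<dots> = E (iid_seq q T) (\<lambda>xs. E (hist H \<sigma> (outcome_fun xs) T) (\<lambda>h. joint_loss L T (h,xs)))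
                  - E (iid_seq q T) ?best"
    by (rule expect_diff[OF iid_seq_finite[OF assms(2)]])
  also have "E (iid_seq q T) (\<lambda>xs. E (hist H \<sigma> (outcome_fun xs) T) (\<lambda>h. joint_loss L T (h,xs)))
             = E (joint_hist H \<sigma> q T) (joint_loss L T)"
    unfolding joint_hist_eq
    by (subst expect_bind) (auto simp: iid_seq_finite[OF assms(2)] hist_finite[OF assms(1)])
  finally show ?thesis unfolding expected_joint_loss[OF assms] .
qed

lemma expected_regret_le_worst:
  assumes "valid_strategy 2 \<sigma>" "finite (set_pmf q)" "set_pmf q \<subseteq> {..<M}" "M \<ge> 1"
    and "loss_bounded M L"
  shows "E (iid_seq q T) (\<lambda>xs. regret 2 L H \<sigma> (outcome_fun xs) T) \<le> worst_regret M L H T \<sigma>"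
proof (rule expect_le_const[OF iid_seq_finite[OF assms(2)]])
  fix xs assume "xs \<in> set_pmf (iid_seq q T)"
  then have "valid_outcomes M (outcome_fun xs)"
    using iid_seq_support assms(3,4) outcome_fun_valid by blast
  then show "regret 2 L H \<sigma> (outcome_fun xs) T \<le> worst_regret M L H T \<sigma>"
    by (rule regret_le_worst[OF assms(1,5)])
qed

section \<open>Indistinguishable outcome distributions force linear regret\<close>

lemma joint_hist_fst_eq:
  assumes "valid_strategy 2 \<sigma>" "\<forall>i<2. map_pmf (H i) q1 = map_pmf (H i) q2"
  shows "map_pmf fst (joint_hist H \<sigma> q1 T) = map_pmf fst (joint_hist H \<sigma> q2 T)"
proof (induction T)
  case 0 then show ?case by simp
next
  case (Suc T)
  have unfold: "map_pmf fst (joint_hist H \<sigma> q (Suc T)) =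
    bind_pmf (map_pmf fst (joint_hist H \<sigma> q T))
      (\<lambda>h. bind_pmf (\<sigma> h) (\<lambda>i. map_pmf (\<lambda>s. h @ [(i,s)]) (map_pmf (H i) q)))" for q
    by (simp add: map_bind_pmf bind_map_pmf pmf.map_comp o_def)
  show ?case unfolding unfold Suc
  proof (intro bind_pmf_cong refl)
    fix h i assume "i \<in> set_pmf (\<sigma> h)"
    then have "i < 2" using assms(1) unfolding valid_strategy_def by blast
    then show "map_pmf (\<lambda>s. h @ [(i, s)]) (map_pmf (H i) q1) =
               map_pmf (\<lambda>s. h @ [(i, s)]) (map_pmf (H i) q2)"
      using assms(2) by simp
  qed
qed

lemma plays0_eq:
  assumes "valid_strategy 2 \<sigma>" "\<forall>i<2. map_pmf (H i) q1 = map_pmf (H i) q2"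
  shows "plays0 H \<sigma> q1 T = plays0 H \<sigma> q2 T"
  unfolding plays0_def joint_hist_fst_eq[OF assms] ..

lemma expected_regret_iid_lower:
  assumes "valid_strategy 2 \<sigma>" "finite (set_pmf q)"
  shows "T * E q (L 1) + (E q (L 0) - E q (L 1)) * plays0 H \<sigma> q T
           - T * min (E q (L 0)) (E q (L 1))
         \<le> E (iid_seq q T) (\<lambda>xs. regret 2 L H \<sigma> (outcome_fun xs) T)"
proof -
  let ?best = "\<lambda>xs. min (sum_list (map (L 0) xs)) (sum_list (map (L 1) xs))"
  have "E (iid_seq q T) ?best \<le> E (iid_seq q T) (\<lambda>xs. sum_list (map (L 0) xs))"
       "E (iid_seq q T) ?best \<le> E (iid_seq q T) (\<lambda>xs. sum_list (map (L 1) xs))"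
    by (rule expect_mono[OF iid_seq_finite[OF assms(2)]], simp)+
  then have "E (iid_seq q T) (\<lambda>xs. min (sum_list (map (L 0) xs)) (sum_list (map (L 1) xs)))
        \<le> min (T * E q (L 0)) (T * E q (L 1))"
    unfolding expect_iid_sum[OF assms(2)] by simp
  then show ?thesis
    unfolding expected_regret_iid[OF assms] by (simp add: min_mult_distrib_left)
qed

lemma indistinguishable_regret_sum:
  assumes "valid_strategy 2 \<sigma>" "finite (set_pmf q1)" "finite (set_pmf q2)"
    "\<forall>i<2. map_pmf (H i) q1 = map_pmf (H i) q2"
    "E q1 (L 0) - E q1 (L 1) = \<epsilon>" "E q2 (L 0) - E q2 (L 1) = - \<epsilon>" "\<epsilon> \<ge> 0"
  shows "T * \<epsilon> \<le> E (iid_seq q1 T) (\<lambda>xs. regret 2 L H \<sigma> (outcome_fun xs) T)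
                 + E (iid_seq q2 T) (\<lambda>xs. regret 2 L H \<sigma> (outcome_fun xs) T)"
proof -
  have min1: "min (E q1 (L 0)) (E q1 (L 1)) = E q1 (L 1)"
    and min2: "min (E q2 (L 0)) (E q2 (L 1)) = E q2 (L 1) - \<epsilon>"
    using assms(5-7) by auto
  have "\<epsilon> * plays0 H \<sigma> q1 T \<le> E (iid_seq q1 T) (\<lambda>xs. regret 2 L H \<sigma> (outcome_fun xs) T)"
    using expected_regret_iid_lower[OF assms(1,2), of T L H] unfolding assms(5) min1
    by (simp add: algebra_simps)
  moreover have "T * \<epsilon> - \<epsilon> * plays0 H \<sigma> q2 T
                 \<le> E (iid_seq q2 T) (\<lambda>xs. regret 2 L H \<sigma> (outcome_fun xs) T)"
    using expected_regret_iid_lower[OF assms(1,3), of T L H] unfolding assms(6) min2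
    by (simp add: algebra_simps)
  ultimately show ?thesis unfolding plays0_eq[OF assms(1,4), of T] by linarith
qed

lemma indistinguishable_pair_trivial:
  assumes M: "M \<ge> 1" and Lb: "loss_bounded M L"
    and q: "set_pmf q1 \<subseteq> {..<M}" "set_pmf q2 \<subseteq> {..<M}"
    and same_feedback: "\<forall>i<2. map_pmf (H i) q1 = map_pmf (H i) q2"
    and gaps: "E q1 (L 0) - E q1 (L 1) = \<epsilon>" "E q2 (L 0) - E q2 (L 1) = - \<epsilon>" and \<epsilon>: "\<epsilon> > 0"
  shows "trivial_game 2 M L H"
proof -
  have fin: "finite (set_pmf q1)" "finite (set_pmf q2)"
    using q finite_subset by blast+
  have "\<epsilon> / 2 * real T \<le> minimax_regret 2 M L H T" for T
  proof (rule le_minimax_regretI)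
    fix \<sigma> assume \<sigma>: "valid_strategy 2 \<sigma>"
    have "T * \<epsilon> \<le> E (iid_seq q1 T) (\<lambda>xs. regret 2 L H \<sigma> (outcome_fun xs) T)
                   + E (iid_seq q2 T) (\<lambda>xs. regret 2 L H \<sigma> (outcome_fun xs) T)"
      using \<epsilon> by (intro indistinguishable_regret_sum[OF \<sigma> fin same_feedback gaps]) auto
    also have "\<dots> \<le> worst_regret M L H T \<sigma> + worst_regret M L H T \<sigma>"
      by (intro add_mono expected_regret_le_worst[OF \<sigma> fin(1) q(1) M Lb]
          expected_regret_le_worst[OF \<sigma> fin(2) q(2) M Lb])
    finally show "\<epsilon> / 2 * real T \<le> worst_regret M L H T \<sigma>" by (simp add: mult.commute)
  qed
  then show ?thesis
    unfolding trivial_game_def using \<epsilon> by (intro disjI2 exI[of _ "\<epsilon> / 2"]) auto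
qed

section \<open>Part (1): a non-trivial game has loss gaps of both signs\<close>

lemma dominated_action_minimax_zero:
  assumes "M \<ge> 1" "loss_bounded M L" "k < 2" "\<forall>j<M. L k j \<le> L (1 - k) j"
  shows "minimax_regret 2 M L H T = 0"
proof -
  define \<sigma> where "\<sigma> = (\<lambda>_::(nat\<times>real) list. return_pmf k)"
  have valid: "valid_strategy 2 \<sigma>" unfolding valid_strategy_def \<sigma>_def using assms(3) by simp
  have "regret 2 L H \<sigma> J T \<le> 0" if J: "valid_outcomes M J" for J
  proof -
    have "E (hist H \<sigma> J T) (\<lambda>h. \<Sum>t<T. L (fst (h ! t)) (J t)) = (\<Sum>t<T. L k (J t))"
      using hist_support[of \<sigma> "{k}"] by (subst expect_cong[where g = "\<lambda>_. \<Sum>t<T. L k (J t)"])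
        (auto simp: \<sigma>_def)
    moreover have "(\<Sum>t<T. L k (J t)) \<le> (\<Sum>t<T. L (1-k) (J t))"
      using assms(4) J unfolding valid_outcomes_def by (intro sum_mono) auto
    ultimately show ?thesis
      using assms(3) unfolding regret_def Min_two by (auto simp: less_2_cases_iff)
  qed
  moreover have "valid_outcomes M (\<lambda>_. 0)" using assms(1) by (simp add: valid_outcomes_def)
  ultimately have "worst_regret M L H T \<sigma> \<le> 0"
    by (intro cSup_least) auto
  then have "minimax_regret 2 M L H T \<le> 0"
    using minimax_regret_le_worst[OF valid assms(2,1), where H=H and T=T] by linarith
  moreover have "0 \<le> minimax_regret 2 M L H T"
    by (rule le_minimax_regretI) (rule worst_regret_nonneg[OF _ assms(2,1)])
  ultimately show ?thesis by linarith
qed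

lemma nontrivial_gap_signs:
  assumes "M \<ge> 1" "loss_bounded M L" "\<not> trivial_game 2 M L H"
  shows "\<exists>j<M. L 0 j - L 1 j > 0" "\<exists>j<M. L 0 j - L 1 j < 0"
proof -
  have "\<not> (\<forall>j<M. L k j \<le> L (1 - k) j)" if "k < 2" for k
    using dominated_action_minimax_zero[OF assms(1,2) that] assms(3)
    unfolding trivial_game_def by blast
  from this[of 0] this[of 1] show "\<exists>j<M. L 0 j - L 1 j > 0" "\<exists>j<M. L 0 j - L 1 j < 0"
    by auto
qed

section \<open>Part (2): the loss gap of a non-trivial game is observable\<close>

definition fscale :: "real \<Rightarrow> (nat \<Rightarrow> real) \<Rightarrow> (nat \<Rightarrow> real)" where
  "fscale c f = (\<lambda>x. c * f x)"

interpretation fv: vector_space fscale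
  by unfold_locales (auto simp: fscale_def fun_eq_iff algebra_simps)

interpretation fvp: vector_space_pair fscale "scaleR :: real \<Rightarrow> real \<Rightarrow> real"
  by unfold_locales

lemma separating_functional:
  assumes "d \<notin> fv.span G"
  shows "\<exists>g. Vector_Spaces.linear fscale (scaleR :: real \<Rightarrow> real \<Rightarrow> real) g
             \<and> (\<forall>x\<in>G. g x = 0) \<and> g d = 1"
proof -
  obtain B where B: "B \<subseteq> G" "fv.independent B" "G \<subseteq> fv.span B"
    using fv.maximal_independent_subset[of G] by blast
  have dB: "d \<notin> fv.span B" using assms fv.span_mono[OF B(1)] by blast
  then have ind: "fv.independent (insert d B)" using B(2) by (rule fv.independent_insertI)
  obtain g where g: "Vector_Spaces.linear fscale (scaleR :: real \<Rightarrow> real \<Rightarrow> real) g"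
    "\<forall>x\<in>insert d B. g x = (if x = d then 1 else 0)"
    using fvp.linear_independent_extend[OF ind, of "\<lambda>x. if x = d then 1 else 0"] by blast
  interpret lg: Vector_Spaces.linear fscale "scaleR :: real \<Rightarrow> real \<Rightarrow> real" g by (rule g(1))
  have "fv.span B \<subseteq> {x. g x = 0}"
  proof (rule fv.span_minimal)
    show "B \<subseteq> {x. g x = 0}" using g(2) dB fv.span_base by fastforce
    show "fv.subspace {x. g x = 0}" by (rule lg.subspace_kernel)
  qed
  then show ?thesis using B(3) g by auto
qed

lemma linear_functional_weights:
  assumes "Vector_Spaces.linear fscale (scaleR :: real \<Rightarrow> real \<Rightarrow> real) g"
    and "\<And>x. x \<ge> M \<Longrightarrow> v x = 0"
  shows "g v = (\<Sum>j<M. v j * g (\<lambda>x. if x = j then 1 else 0))"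
proof -
  interpret lg: Vector_Spaces.linear fscale "scaleR :: real \<Rightarrow> real \<Rightarrow> real" g by (rule assms(1))
  have sum_apply: "(sum F A) x = (\<Sum>a\<in>A. F a x)" for F :: "nat \<Rightarrow> nat \<Rightarrow> real" and A x
    by (induction A rule: infinite_finite_induct) auto
  have "v = (\<Sum>j<M. fscale (v j) (\<lambda>x. if x = j then 1 else 0))"
  proof
    fix x
    have "(\<Sum>j<M. fscale (v j) (\<lambda>x. if x = j then 1 else 0)) x = (\<Sum>j<M. if j = x then v j else 0)"
      unfolding sum_apply fscale_def by (rule sum.cong) auto
    also have "\<dots> = (if x < M then v x else 0)" by (simp add: sum.delta)
    finally have "(\<Sum>j<M. fscale (v j) (\<lambda>x. if x = j then 1 else 0)) x = (if x < M then v x else 0)" .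
    then show "v x = (\<Sum>j<M. fscale (v j) (\<lambda>x. if x = j then 1 else 0)) x"
      using assms(2)[of x] by auto
  qed
  then have "g v = g (\<Sum>j<M. fscale (v j) (\<lambda>x. if x = j then 1 else 0))" by metis
  then show ?thesis by (simp add: lg.sum lg.scale)
qed

definition decomposable :: "nat \<Rightarrow> (nat \<Rightarrow> nat \<Rightarrow> real) \<Rightarrow> (nat \<Rightarrow> real) set" where
  "decomposable M H = {v. \<exists>f g. \<forall>j. v j = (if j < M then f (H 0 j) + g (H 1 j) else 0)}"

lemma decomposable_subspace: "fv.subspace (decomposable M H)"
proof (rule fv.subspaceI)
  show "0 \<in> decomposable M H"
    unfolding decomposable_def by (intro CollectI exI[of _ "\<lambda>_. 0"]) auto
  show "x + y \<in> decomposable M H" if x: "x \<in> decomposable M H" and y: "y \<in> decomposable M H"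
    for x y
  proof -
    obtain f1 g1 where "\<forall>j. x j = (if j < M then f1 (H 0 j) + g1 (H 1 j) else 0)"
      using x unfolding decomposable_def by blast
    moreover obtain f2 g2 where "\<forall>j. y j = (if j < M then f2 (H 0 j) + g2 (H 1 j) else 0)"
      using y unfolding decomposable_def by blast
    ultimately show ?thesis unfolding decomposable_def
      by (intro CollectI exI[of _ "\<lambda>s. f1 s + f2 s"] exI[of _ "\<lambda>s. g1 s + g2 s"]) simp
  qed
  show "fscale c x \<in> decomposable M H" if x: "x \<in> decomposable M H" for c x
  proof -
    obtain f g where "\<forall>j. x j = (if j < M then f (H 0 j) + g (H 1 j) else 0)"
      using x unfolding decomposable_def by blast
    then show ?thesis unfolding decomposable_def
      by (intro CollectI exI[of _ "\<lambda>s. c * f s"] exI[of _ "\<lambda>s. c * g s"])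
        (simp add: fscale_def algebra_simps)
  qed
qed

definition restrict_below :: "nat \<Rightarrow> (nat \<Rightarrow> real) \<Rightarrow> nat \<Rightarrow> real" where
  "restrict_below M v = (\<lambda>j. if j < M then v j else 0)"

definition feedback_class :: "nat \<Rightarrow> (nat \<Rightarrow> nat \<Rightarrow> real) \<Rightarrow> nat \<Rightarrow> real \<Rightarrow> nat \<Rightarrow> real" where
  "feedback_class M H i s = restrict_below M (\<lambda>j. if H i j = s then 1 else 0)"

definition feedback_generators :: "nat \<Rightarrow> (nat \<Rightarrow> nat \<Rightarrow> real) \<Rightarrow> (nat \<Rightarrow> real) set" where
  "feedback_generators M H =
     {feedback_class M H i s | i s. i < 2} \<union> {restrict_below M (\<lambda>_. 1)}"

lemma feedback_generators_decomposable: "feedback_generators M H \<subseteq> decomposable M H"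
proof
  fix x assume "x \<in> feedback_generators M H"
  then consider s where "x = feedback_class M H 0 s" | s where "x = feedback_class M H 1 s"
    | "x = restrict_below M (\<lambda>_. 1)"
    unfolding feedback_generators_def by (auto simp: less_2_cases_iff)
  then show "x \<in> decomposable M H"
  proof cases
    case (1 s)
    show ?thesis unfolding decomposable_def 1 feedback_class_def restrict_below_def
      by (intro CollectI exI[of _ "\<lambda>y. if y = s then 1 else 0"] exI[of _ "\<lambda>_. 0"]) auto
  next
    case (2 s)
    show ?thesis unfolding decomposable_def 2 feedback_class_def restrict_below_def
      by (intro CollectI exI[of _ "\<lambda>_. 0"] exI[of _ "\<lambda>y. if y = s then 1 else 0"]) auto
  next
    case 3
    show ?thesis unfolding decomposable_def 3 restrict_below_def
      by (intro CollectI exI[of _ "\<lambda>_. 1"] exI[of _ "\<lambda>_. 0"]) auto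
  qed
qed

lemma span_feedback_generators_decomposable:
  assumes "restrict_below M d \<in> fv.span (feedback_generators M H)"
  shows "\<exists>f g. \<forall>j<M. d j = f (H 0 j) + g (H 1 j)"
proof -
  have "restrict_below M d \<in> decomposable M H"
    using assms fv.span_minimal[OF feedback_generators_decomposable decomposable_subspace] by blast
  then obtain f g where "\<forall>j. restrict_below M d j = (if j < M then f (H 0 j) + g (H 1 j) else 0)"
    unfolding decomposable_def by blast
  then have "\<forall>j<M. d j = f (H 0 j) + g (H 1 j)" unfolding restrict_below_def by metis
  then show ?thesis by blast
qed

lemma blind_weights_outside_span:
  assumes "restrict_below M d \<notin> fv.span (feedback_generators M H)"
  shows "\<exists>w. (\<forall>i<2. \<forall>s. (\<Sum>j\<in>{j. j<M \<and> H i j = s}. w j) = 0)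
             \<and> (\<Sum>j<M. w j) = 0 \<and> (\<Sum>j<M. w j * d j) = 1"
proof -
  obtain g where g: "Vector_Spaces.linear fscale (scaleR :: real \<Rightarrow> real \<Rightarrow> real) g"
    "\<forall>x\<in>feedback_generators M H. g x = 0" "g (restrict_below M d) = 1"
    using separating_functional[OF assms] by blast
  define w where "w j = g (\<lambda>x. if x = j then 1 else 0)" for j
  have weights: "g (restrict_below M v) = (\<Sum>j<M. v j * w j)" for v
    unfolding w_def by (subst linear_functional_weights[OF g(1), of M])
      (auto simp: restrict_below_def intro!: sum.cong)
  have "(\<Sum>j\<in>{j. j<M \<and> H i j = s}. w j) = 0" if "i < 2" for i s
  proof -
    have "{j. j<M \<and> H i j = s} = {j\<in>{..<M}. H i j = s}" by auto
    then have "(\<Sum>j\<in>{j. j<M \<and> H i j = s}. w j) = (\<Sum>j<M. if H i j = s then w j else 0)"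
      using sum.inter_filter[of "{..<M}" w "\<lambda>j. H i j = s"] by simp
    also have "\<dots> = (\<Sum>j<M. (if H i j = s then 1 else 0) * w j)" by (rule sum.cong) auto
    also have "\<dots> = g (feedback_class M H i s)" unfolding feedback_class_def weights ..
    also have "\<dots> = 0" using g(2) that unfolding feedback_generators_def by blast
    finally show ?thesis .
  qed
  moreover have "(\<Sum>j<M. w j) = 0"
    using weights[of "\<lambda>_. 1"] g(2) unfolding feedback_generators_def by simp
  moreover have "(\<Sum>j<M. w j * d j) = 1"
    using weights[of d] g(3) by (simp add: mult.commute)
  ultimately show ?thesis by blast
qed

lemma decomposable_or_blind_weights:
  fixes d :: "nat \<Rightarrow> real" and H :: "nat \<Rightarrow> nat \<Rightarrow> real"
  shows "(\<exists>f g. \<forall>j<M. d j = f (H 0 j) + g (H 1 j)) \<or>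
    (\<exists>w. (\<forall>i<2. \<forall>s. (\<Sum>j\<in>{j. j<M \<and> H i j = s}. w j) = 0)
         \<and> (\<Sum>j<M. w j) = 0 \<and> (\<Sum>j<M. w j * d j) = 1)"
  using span_feedback_generators_decomposable blind_weights_outside_span by blast

lemma balancing_weights:
  fixes d :: "nat \<Rightarrow> real"
  assumes "j1 < M" "d j1 > 0" "j2 < M" "d j2 < 0"
  shows "\<exists>r. (\<forall>j. r j > 0) \<and> (\<Sum>j<M. r j * d j) = 0"
proof -
  define Sp where "Sp = (\<Sum>j<M. max (d j) 0)"
  define Sn where "Sn = (\<Sum>j<M. max (- d j) 0)"
  have "max (d j1) 0 \<le> Sp" unfolding Sp_def using assms(1) by (intro member_le_sum) auto
  then have Sp: "Sp > 0" using assms(2) by simp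
  have "max (- d j2) 0 \<le> Sn" unfolding Sn_def using assms(3) by (intro member_le_sum) auto
  then have Sn: "Sn > 0" using assms(4) by simp
  define r where "r j = (if d j > 0 then Sn else if d j < 0 then Sp else 1)" for j
  have "r j * d j = Sn * max (d j) 0 - Sp * max (- d j) 0" for j
    unfolding r_def by auto
  then have "(\<Sum>j<M. r j * d j) = Sn * Sp - Sp * Sn"
    by (simp add: sum_subtractf sum_distrib_left Sp_def Sn_def)
  then show ?thesis using Sp Sn by (intro exI[of _ r]) (auto simp: r_def)
qed

lemma perturbed_distributions:
  fixes r w :: "nat \<Rightarrow> real"
  assumes "M \<ge> 1" "\<forall>j. r j > 0" "(\<Sum>j<M. w j) = 0"
  obtains \<delta> where "\<delta> > 0"
    "\<And>c. \<bar>c\<bar> \<le> \<delta> \<Longrightarrow> \<exists>q. set_pmf q \<subseteq> {..<M} \<and>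
                      (\<forall>j<M. pmf q j = (r j + c * w j) / (\<Sum>j<M. r j))"
proof -
  define R where "R = (\<Sum>j<M. r j)"
  have R: "R > 0" unfolding R_def using assms(1,2) by (intro sum_pos) (auto simp: lessThan_empty_iff)
  define m where "m = Min (r ` {..<M})"
  have "m \<in> r ` {..<M}" unfolding m_def using assms(1) by (intro Min_in) (auto simp: lessThan_empty_iff)
  then have m: "m > 0" using assms(2) by auto
  define W where "W = (\<Sum>j<M. \<bar>w j\<bar>) + 1"
  have W: "W > 0" unfolding W_def by (simp add: add_nonneg_pos sum_nonneg)
  define \<delta> where "\<delta> = m / W"
  have small: "\<bar>c * w j\<bar> \<le> r j" if "\<bar>c\<bar> \<le> \<delta>" "j < M" for c j
  proof -
    have "\<bar>w j\<bar> \<le> W" unfolding W_def using \<open>j < M\<close> member_le_sum[of j "{..<M}" "\<lambda>j. \<bar>w j\<bar>"]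
      by simp
    then have "\<bar>c\<bar> * \<bar>w j\<bar> \<le> \<delta> * W" using that(1) by (intro mult_mono) auto
    also have "\<dots> = m" unfolding \<delta>_def using W by simp
    also have "m \<le> r j" unfolding m_def using that(2) by (intro Min_le) auto
    finally show ?thesis by (simp add: abs_mult)
  qed
  have "\<exists>q. set_pmf q \<subseteq> {..<M} \<and> (\<forall>j<M. pmf q j = (r j + c * w j) / R)"
    if c: "\<bar>c\<bar> \<le> \<delta>" for c
  proof (rule pmf_from_weights)
    show "\<forall>j<M. 0 \<le> (r j + c * w j) / R"
    proof (intro allI impI)
      fix j assume "j < M"
      then have "0 \<le> r j + c * w j" using small[OF c \<open>j < M\<close>] by (auto simp: abs_le_iff)
      then show "0 \<le> (r j + c * w j) / R" using R by simp
    qed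
    show "(\<Sum>j<M. (r j + c * w j) / R) = 1"
      using R assms(3) by (simp add: sum_divide_distrib[symmetric] sum.distrib
          sum_distrib_left[symmetric] R_def[symmetric])
  qed
  moreover have "\<delta> > 0" unfolding \<delta>_def using m W by simp
  ultimately show ?thesis using that unfolding R_def by blast
qed

text \<open>From weights w that are blind to the feedback, orthogonal to the constants and
  correlated with the gap d, perturbing a balanced distribution in the directions +w and
  -w yields two distributions with the same feedback laws and mean gaps of opposite signs.\<close>

lemma blind_perturbation_pair:
  fixes d w :: "nat \<Rightarrow> real" and H :: "nat \<Rightarrow> nat \<Rightarrow> real"
  assumes M: "M \<ge> 1" and signs: "j1 < M" "d j1 > 0" "j2 < M" "d j2 < 0"
    and w_blind: "\<forall>i<2. \<forall>s. (\<Sum>j\<in>{j. j<M \<and> H i j = s}. w j) = 0"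
    and w_sum: "(\<Sum>j<M. w j) = 0" and w_gap: "(\<Sum>j<M. w j * d j) = 1"
  shows "\<exists>q1 q2 \<epsilon>. \<epsilon> > 0 \<and> set_pmf q1 \<subseteq> {..<M} \<and> set_pmf q2 \<subseteq> {..<M}
           \<and> (\<forall>i<2. map_pmf (H i) q1 = map_pmf (H i) q2)
           \<and> (\<Sum>j<M. pmf q1 j * d j) = \<epsilon> \<and> (\<Sum>j<M. pmf q2 j * d j) = - \<epsilon>"
proof -
  obtain r where r_pos: "\<forall>j. r j > 0" and r_gap: "(\<Sum>j<M. r j * d j) = 0"
    using balancing_weights[OF signs] by blast
  define R where "R = (\<Sum>j<M. r j)"
  have R: "R > 0" unfolding R_def using M r_pos by (intro sum_pos) (auto simp: lessThan_empty_iff)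
  obtain \<delta> where \<delta>: "\<delta> > 0" and perturb: "\<And>c. \<bar>c\<bar> \<le> \<delta> \<Longrightarrow> \<exists>q. set_pmf q \<subseteq> {..<M} \<and>
                      (\<forall>j<M. pmf q j = (r j + c * w j) / R)"
    using perturbed_distributions[OF M r_pos w_sum] unfolding R_def by blast
  obtain q1 where q1: "set_pmf q1 \<subseteq> {..<M}" "\<forall>j<M. pmf q1 j = (r j + \<delta> * w j) / R"
    using perturb[of \<delta>] \<delta> by auto
  obtain q2 where q2: "set_pmf q2 \<subseteq> {..<M}" "\<forall>j<M. pmf q2 j = (r j + (- \<delta>) * w j) / R"
    using perturb[of "- \<delta>"] \<delta> by auto
  have gap: "(\<Sum>j<M. pmf q j * d j) = c / R"
    if "\<forall>j<M. pmf q j = (r j + c * w j) / R" for q c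
  proof -
    have "(\<Sum>j<M. pmf q j * d j) = (\<Sum>j<M. (r j + c * w j) / R * d j)"
      using that by (intro sum.cong) auto
    also have "\<dots> = ((\<Sum>j<M. r j * d j) + c * (\<Sum>j<M. w j * d j)) / R"
      by (simp add: sum_divide_distrib[symmetric] sum.distrib sum_distrib_left algebra_simps)
    finally show ?thesis unfolding r_gap w_gap by simp
  qed
  have feedback: "pmf (map_pmf (H i) q) s = (\<Sum>j\<in>{j. j<M \<and> H i j = s}. r j) / R"
    if "i < 2" "set_pmf q \<subseteq> {..<M}" "\<forall>j<M. pmf q j = (r j + c * w j) / R" for i q c s
  proof -
    have "pmf (map_pmf (H i) q) s = (\<Sum>j\<in>{j. j<M \<and> H i j = s}. (r j + c * w j) / R)"
      unfolding pmf_map_on_range[OF that(2)] using that(3) by (intro sum.cong) auto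
    also have "\<dots> = ((\<Sum>j\<in>{j. j<M \<and> H i j = s}. r j) + c * (\<Sum>j\<in>{j. j<M \<and> H i j = s}. w j)) / R"
      by (simp add: sum_divide_distrib[symmetric] sum.distrib sum_distrib_left)
    finally show ?thesis using w_blind that(1) by simp
  qed
  have "\<forall>i<2. map_pmf (H i) q1 = map_pmf (H i) q2"
    using feedback[OF _ q1] feedback[OF _ q2] by (auto intro: pmf_eqI)
  then show ?thesis
    using q1 q2 gap[OF q1(2)] gap[OF q2(2)] \<delta> R by (intro exI[of _ q1] exI[of _ q2] exI[of _ "\<delta> / R"]) auto
qed

lemma nontrivial_gap_observable:
  assumes M: "M \<ge> 1" and Lb: "loss_bounded M L" and nt: "\<not> trivial_game 2 M L H"
  shows "\<exists>f g. \<forall>j<M. L 0 j - L 1 j = f (H 0 j) + g (H 1 j)"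
proof (rule ccontr)
  assume not_obs: "\<not> ?thesis"
  define d where "d j = L 0 j - L 1 j" for j
  obtain w where w: "\<forall>i<2. \<forall>s. (\<Sum>j\<in>{j. j<M \<and> H i j = s}. w j) = 0"
    "(\<Sum>j<M. w j) = 0" "(\<Sum>j<M. w j * d j) = 1"
    using decomposable_or_blind_weights[of M d H] not_obs unfolding d_def by blast
  obtain j1 j2 where signs: "j1 < M" "d j1 > 0" "j2 < M" "d j2 < 0"
    using nontrivial_gap_signs[OF assms] unfolding d_def by blast
  obtain q1 q2 \<epsilon> where \<epsilon>: "\<epsilon> > 0"
    and q: "set_pmf q1 \<subseteq> {..<M}" "set_pmf q2 \<subseteq> {..<M}"
    and feedback: "\<forall>i<2. map_pmf (H i) q1 = map_pmf (H i) q2"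
    and gaps: "(\<Sum>j<M. pmf q1 j * d j) = \<epsilon>" "(\<Sum>j<M. pmf q2 j * d j) = - \<epsilon>"
    using blind_perturbation_pair[OF M signs w] by blast
  have mean_gap: "E q (L 0) - E q (L 1) = (\<Sum>j<M. pmf q j * d j)" if "set_pmf q \<subseteq> {..<M}" for q
    unfolding expect_on_range[OF that] d_def by (simp add: sum_subtractf[symmetric] right_diff_distrib)
  have "E q1 (L 0) - E q1 (L 1) = \<epsilon>" "E q2 (L 0) - E q2 (L 1) = - \<epsilon>"
    using mean_gap[OF q(1)] mean_gap[OF q(2)] gaps by simp_all
  then have "trivial_game 2 M L H"
    by (rule indistinguishable_pair_trivial[OF M Lb q feedback _ _ \<epsilon>])
  then show False using nt by blast
qed

section \<open>Part (3): reduction to a bandit game and the upper bound\<close>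

lemma observable_bandit_representation:
  fixes L H :: "nat \<Rightarrow> nat \<Rightarrow> real" and f g :: "real \<Rightarrow> real"
  assumes "\<forall>j<M. L 0 j - L 1 j = f (H 0 j) + g (H 1 j)"
  shows "\<exists>\<phi> c B. B > 0 \<and> (\<forall>i<2. \<forall>j<M. L i j = \<phi> i (H i j) - c j)
               \<and> (\<forall>i<2. \<forall>j<M. 0 \<le> \<phi> i (H i j) \<and> \<phi> i (H i j) \<le> B)"
proof -
  define B0 where "B0 = (\<Sum>j<M. \<bar>f (H 0 j)\<bar> + \<bar>g (H 1 j)\<bar>)"
  define \<phi> where "\<phi> i s = (if i = (0::nat) then f s + B0 else B0 - g s)" for i s
  define c where "c j = \<phi> 0 (H 0 j) - L 0 j" for j
  have bound: "\<bar>f (H 0 j)\<bar> + \<bar>g (H 1 j)\<bar> \<le> B0" if "j < M" for j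
    unfolding B0_def using that by (intro member_le_sum) auto
  have "0 \<le> B0" unfolding B0_def by (intro sum_nonneg) auto
  moreover have "\<forall>i<2. \<forall>j<M. L i j = \<phi> i (H i j) - c j"
    using assms by (auto simp: less_2_cases_iff c_def \<phi>_def)
  moreover have "\<forall>i<2. \<forall>j<M. 0 \<le> \<phi> i (H i j) \<and> \<phi> i (H i j) \<le> 2 * B0 + 1"
    using bound by (fastforce simp: less_2_cases_iff \<phi>_def abs_le_iff)
  ultimately show ?thesis by (intro exI[of _ \<phi>] exI[of _ c] exI[of _ "2 * B0 + 1"]) auto
qed

definition translate :: "(nat \<Rightarrow> real \<Rightarrow> real) \<Rightarrow> (nat \<times> real) list \<Rightarrow> (nat \<times> real) list" where
  "translate \<phi> = map (\<lambda>x. (fst x, \<phi> (fst x) (snd x)))"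

lemma hist_translate:
  "hist (\<lambda>i j. \<phi> i (H i j)) \<sigma> J T = map_pmf (translate \<phi>) (hist H (\<lambda>h. \<sigma> (translate \<phi> h)) J T)"
  by (induction T) (simp_all add: map_bind_pmf bind_map_pmf pmf.map_comp o_def translate_def)

text \<open>Playing a bandit strategy on translated feedbacks produces the same actions, and the
  outcome-dependent shift c cancels in the regret.\<close>

lemma bandit_harder:
  assumes Lrep: "\<forall>i<2. \<forall>j<M. L i j = \<phi> i (H i j) - c j"
  shows "easier 2 M L H (\<lambda>i j. \<phi> i (H i j)) (\<lambda>i j. \<phi> i (H i j))"
  unfolding easier_def
proof (intro allI impI)
  fix \<sigma> assume "valid_strategy 2 \<sigma>"
  define \<sigma>' where "\<sigma>' = (\<lambda>h. \<sigma> (translate \<phi> h))"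
  have \<sigma>': "valid_strategy 2 \<sigma>'"
    using \<open>valid_strategy 2 \<sigma>\<close> unfolding valid_strategy_def \<sigma>'_def by blast
  let ?L' = "\<lambda>i j. \<phi> i (H i j)"
  have "actions H \<sigma>' J T = actions ?L' \<sigma> J T \<and> regret 2 L H \<sigma>' J T \<le> regret 2 ?L' ?L' \<sigma> J T"
    if J: "valid_outcomes M J" for J T
  proof
    have ht: "hist ?L' \<sigma> J T = map_pmf (translate \<phi>) (hist H \<sigma>' J T)"
      unfolding \<sigma>'_def by (rule hist_translate)
    show "actions H \<sigma>' J T = actions ?L' \<sigma> J T"
      unfolding actions_def ht by (simp add: pmf.map_comp o_def translate_def)
    define C where "C = (\<Sum>t<T. c (J t))"
    have shift: "?L' i (J t) = L i (J t) + c (J t)" if "i < 2" for i t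
      using Lrep that J unfolding valid_outcomes_def by auto
    have "E (hist ?L' \<sigma> J T) (\<lambda>h. \<Sum>t<T. ?L' (fst (h ! t)) (J t)) =
          E (hist H \<sigma>' J T) (\<lambda>h. (\<Sum>t<T. L (fst (h ! t)) (J t)) + C)"
      unfolding ht integral_map_pmf
    proof (rule expect_cong)
      fix h assume "h \<in> set_pmf (hist H \<sigma>' J T)"
      then have "length h = T" "\<forall>t<T. fst (h!t) < 2" using valid_hist_support[OF \<sigma>'] by blast+
      then show "(\<Sum>t<T. ?L' (fst (translate \<phi> h ! t)) (J t)) = (\<Sum>t<T. L (fst (h ! t)) (J t)) + C"
        unfolding C_def sum.distrib[symmetric] by (intro sum.cong) (auto simp: translate_def shift)
    qed
    also have "\<dots> = E (hist H \<sigma>' J T) (\<lambda>h. \<Sum>t<T. L (fst (h ! t)) (J t)) + C"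
      by (simp add: expect_add hist_finite[OF \<sigma>'])
    finally show "regret 2 L H \<sigma>' J T \<le> regret 2 ?L' ?L' \<sigma> J T"
      unfolding regret_def Min_two C_def using shift[of 0] shift[of 1]
      by (simp add: sum.distrib min_add_distrib_right)
  qed
  then show "\<exists>\<sigma>'. valid_strategy 2 \<sigma>' \<and> (\<forall>J. valid_outcomes M J \<longrightarrow>
      (\<forall>T. actions H \<sigma>' J T = actions ?L' \<sigma> J T \<and> regret 2 L H \<sigma>' J T \<le> regret 2 ?L' ?L' \<sigma> J T))"
    using \<sigma>' by blast
qed

text \<open>The strategy keeps importance-weighted estimates X = (X0, X1) of the cumulative
  bandit losses, plays action i with probability proportional to exp (- eta Xi), and
  tracks Q, the sum of the squared observed losses divided by their probabilities.
  Observed feedbacks are clipped at 0 so that the estimates are non-negative.\<close>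

definition coord :: "nat \<Rightarrow> real \<times> real \<Rightarrow> real" where
  "coord i X = (if i = 0 then fst X else snd X)"

definition exp3_weight :: "real \<Rightarrow> real \<times> real \<Rightarrow> real" where
  "exp3_weight \<eta> X = exp (- \<eta> * fst X) + exp (- \<eta> * snd X)"

definition exp3_prob :: "real \<Rightarrow> real \<times> real \<Rightarrow> nat \<Rightarrow> real" where
  "exp3_prob \<eta> X i = exp (- \<eta> * coord i X) / exp3_weight \<eta> X"

definition clip :: "(nat \<Rightarrow> real \<Rightarrow> real) \<Rightarrow> nat \<Rightarrow> real \<Rightarrow> real" where
  "clip \<phi> i s = max 0 (\<phi> i s)"

definition estimate_update ::
  "real \<Rightarrow> (nat \<Rightarrow> real \<Rightarrow> real) \<Rightarrow> real \<times> real \<Rightarrow> nat \<times> real \<Rightarrow> real \<times> real" where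
  "estimate_update \<eta> \<phi> X x =
     (if fst x = 0 then (fst X + clip \<phi> 0 (snd x) / exp3_prob \<eta> X 0, snd X)
      else (fst X, snd X + clip \<phi> (fst x) (snd x) / exp3_prob \<eta> X (fst x)))"

definition exp3_step :: "real \<Rightarrow> (nat \<Rightarrow> real \<Rightarrow> real) \<Rightarrow> (real \<times> real) \<times> real
                           \<Rightarrow> nat \<times> real \<Rightarrow> (real \<times> real) \<times> real" where
  "exp3_step \<eta> \<phi> Y x = (estimate_update \<eta> \<phi> (fst Y) x,
                        snd Y + (clip \<phi> (fst x) (snd x))^2 / exp3_prob \<eta> (fst Y) (fst x))"

definition exp3_state :: "real \<Rightarrow> (nat \<Rightarrow> real \<Rightarrow> real) \<Rightarrow> (nat \<times> real) list
                            \<Rightarrow> (real \<times> real) \<times> real" where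
  "exp3_state \<eta> \<phi> h = foldl (exp3_step \<eta> \<phi>) ((0,0),0) h"

definition exp3 :: "real \<Rightarrow> (nat \<Rightarrow> real \<Rightarrow> real) \<Rightarrow> strategy" where
  "exp3 \<eta> \<phi> h = two_point (exp3_prob \<eta> (fst (exp3_state \<eta> \<phi> h)) 0) 0 1"

definition observed_loss :: "(nat \<Rightarrow> real \<Rightarrow> real) \<Rightarrow> (nat \<times> real) list \<Rightarrow> real" where
  "observed_loss \<phi> h = sum_list (map (\<lambda>x. clip \<phi> (fst x) (snd x)) h)"

lemma exp3_weight_pos: "exp3_weight \<eta> X > 0"
  unfolding exp3_weight_def by (simp add: add_pos_pos)

lemma exp3_prob_pos: "exp3_prob \<eta> X i > 0"
  unfolding exp3_prob_def using exp3_weight_pos by simp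

lemma exp3_prob_one: "exp3_prob \<eta> X i = 1 - exp3_prob \<eta> X 0" if "i \<noteq> 0"
  using that exp3_weight_pos[of \<eta> X]
  by (simp add: exp3_prob_def coord_def exp3_weight_def field_simps)

lemma exp3_state_snoc:
  "fst (exp3_state \<eta> \<phi> (h @ [x])) = estimate_update \<eta> \<phi> (fst (exp3_state \<eta> \<phi> h)) x"
  "snd (exp3_state \<eta> \<phi> (h @ [x])) = snd (exp3_state \<eta> \<phi> h)
      + (clip \<phi> (fst x) (snd x))^2 / exp3_prob \<eta> (fst (exp3_state \<eta> \<phi> h)) (fst x)"
  by (simp_all add: exp3_state_def exp3_step_def)

lemma exp3_valid: "valid_strategy 2 (exp3 \<eta> \<phi>)"
  unfolding valid_strategy_def exp3_def using two_point_support by fastforce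

lemma hist_exp3_Suc:
  "E (hist H (exp3 \<eta> \<phi>) J (Suc T)) F = E (hist H (exp3 \<eta> \<phi>) J T) (\<lambda>h.
      exp3_prob \<eta> (fst (exp3_state \<eta> \<phi> h)) 0 * F (h @ [(0, H 0 (J T))])
      + (1 - exp3_prob \<eta> (fst (exp3_state \<eta> \<phi> h)) 0) * F (h @ [(1, H 1 (J T))]))"
proof -
  have p0: "0 \<le> exp3_prob \<eta> X 0" and p1: "exp3_prob \<eta> X 0 \<le> 1" for X
    using exp3_prob_pos[of \<eta> X 0] exp3_prob_pos[of \<eta> X 1] exp3_prob_one[of 1 \<eta> X] by auto
  show ?thesis
    unfolding hist_expect_Suc[OF exp3_valid] exp3_def by (subst two_point_expect[OF p0 p1]) simp
qed

lemma exp3_estimate_unbiased: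
  assumes "k < 2"
  shows "E (hist H (exp3 \<eta> \<phi>) J T) (\<lambda>h. coord k (fst (exp3_state \<eta> \<phi> h)))
         = (\<Sum>t<T. clip \<phi> k (H k (J t)))"
proof (induction T)
  case 0 then show ?case by (simp add: exp3_state_def coord_def)
next
  case (Suc T)
  have "E (hist H (exp3 \<eta> \<phi>) J (Suc T)) (\<lambda>h. coord k (fst (exp3_state \<eta> \<phi> h))) =
        E (hist H (exp3 \<eta> \<phi>) J T) (\<lambda>h. coord k (fst (exp3_state \<eta> \<phi> h)) + clip \<phi> k (H k (J T)))"
    unfolding hist_exp3_Suc
  proof (rule expect_cong)
    fix h
    define p where "p = exp3_prob \<eta> (fst (exp3_state \<eta> \<phi> h)) 0"
    have "0 < p" "0 < 1 - p"
      unfolding p_def using exp3_prob_pos exp3_prob_one[of 1] by (metis, metis one_neq_zero)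
    then show "p * coord k (fst (exp3_state \<eta> \<phi> (h @ [(0, H 0 (J T))]))) +
       (1 - p) * coord k (fst (exp3_state \<eta> \<phi> (h @ [(1, H 1 (J T))]))) =
       coord k (fst (exp3_state \<eta> \<phi> h)) + clip \<phi> k (H k (J T))"
      using assms unfolding exp3_state_snoc
      by (auto simp: less_2_cases_iff estimate_update_def coord_def exp3_prob_one
          p_def[symmetric] field_simps)
  qed
  also have "\<dots> = E (hist H (exp3 \<eta> \<phi>) J T) (\<lambda>h. coord k (fst (exp3_state \<eta> \<phi> h)))
                  + clip \<phi> k (H k (J T))"
    by (simp add: expect_add hist_finite[OF exp3_valid])
  finally show ?case using Suc by simp
qed

lemma exp3_second_moment:
  "E (hist H (exp3 \<eta> \<phi>) J T) (\<lambda>h. snd (exp3_state \<eta> \<phi> h))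
   = (\<Sum>t<T. (clip \<phi> 0 (H 0 (J t)))^2 + (clip \<phi> 1 (H 1 (J t)))^2)"
proof (induction T)
  case 0 then show ?case by (simp add: exp3_state_def)
next
  case (Suc T)
  let ?Q = "(clip \<phi> 0 (H 0 (J T)))^2 + (clip \<phi> 1 (H 1 (J T)))^2"
  have "E (hist H (exp3 \<eta> \<phi>) J (Suc T)) (\<lambda>h. snd (exp3_state \<eta> \<phi> h)) =
        E (hist H (exp3 \<eta> \<phi>) J T) (\<lambda>h. snd (exp3_state \<eta> \<phi> h) + ?Q)"
    unfolding hist_exp3_Suc
  proof (rule expect_cong)
    fix h
    define p where "p = exp3_prob \<eta> (fst (exp3_state \<eta> \<phi> h)) 0"
    have "0 < p" "0 < 1 - p"
      unfolding p_def using exp3_prob_pos exp3_prob_one[of 1] by (metis, metis one_neq_zero)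
    then show "p * snd (exp3_state \<eta> \<phi> (h @ [(0, H 0 (J T))])) +
       (1 - p) * snd (exp3_state \<eta> \<phi> (h @ [(1, H 1 (J T))])) = snd (exp3_state \<eta> \<phi> h) + ?Q"
      unfolding exp3_state_snoc by (simp add: exp3_prob_one p_def[symmetric] field_simps)
  qed
  also have "\<dots> = E (hist H (exp3 \<eta> \<phi>) J T) (\<lambda>h. snd (exp3_state \<eta> \<phi> h)) + ?Q"
    by (simp add: expect_add hist_finite[OF exp3_valid])
  finally show ?case using Suc by simp
qed

lemma exp_neg_quadratic: "(y::real) \<ge> 0 \<Longrightarrow> exp (- y) \<le> 1 - y + y^2 / 2"
proof -
  assume y: "y \<ge> 0"
  have lower: "1 + y + y^2/2 \<le> exp y" by (rule exp_lower_Taylor_quadratic[OF y])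
  have pos: "1 + y + y^2/2 > 0" using y by (simp add: add_pos_nonneg)
  have "1 \<le> (1 - y + y^2/2) * (1 + y + y^2/2)"
    by (simp add: algebra_simps power2_eq_square power4_eq_xxxx) (simp add: mult_nonneg_nonneg y)
  then have "1 / (1 + y + y^2/2) \<le> 1 - y + y^2 / 2" using pos by (simp add: divide_le_eq)
  moreover have "exp (- y) \<le> 1 / (1 + y + y^2/2)"
    unfolding exp_minus' by (rule divide_left_mono[OF lower]) (use pos in auto)
  ultimately show ?thesis by linarith
qed

lemma exp3_weight_update:
  fixes \<eta> :: real and \<phi> :: "nat \<Rightarrow> real \<Rightarrow> real" and X :: "real \<times> real" and x :: "nat \<times> real"
  defines "p \<equiv> exp3_prob \<eta> X (fst x)" and "l \<equiv> clip \<phi> (fst x) (snd x)"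
  shows "exp3_weight \<eta> (estimate_update \<eta> \<phi> X x)
         = exp3_weight \<eta> X * (1 - p + p * exp (- \<eta> * l / p))"
proof -
  define W where "W = exp3_weight \<eta> X"
  have pW: "p * W = exp (- \<eta> * coord (fst x) X)"
    unfolding p_def W_def exp3_prob_def using exp3_weight_pos[of \<eta> X] by simp
  have shift: "exp (- \<eta> * (a + l / p)) = exp (- \<eta> * a) * exp (- \<eta> * l / p)" for a
    by (simp add: mult_exp_exp algebra_simps)
  show ?thesis
  proof (cases "fst x = 0")
    case True
    have "exp3_weight \<eta> (estimate_update \<eta> \<phi> X x) = exp (- \<eta> * (fst X + l / p)) + exp (- \<eta> * snd X)"
      using True by (simp add: exp3_weight_def estimate_update_def p_def l_def)
    also have "\<dots> = W - p * W + p * W * exp (- \<eta> * l / p)"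
      unfolding pW shift using True by (simp add: W_def exp3_weight_def coord_def)
    finally show ?thesis by (simp add: W_def algebra_simps)
  next
    case False
    have "exp3_weight \<eta> (estimate_update \<eta> \<phi> X x) = exp (- \<eta> * fst X) + exp (- \<eta> * (snd X + l / p))"
      using False by (simp add: exp3_weight_def estimate_update_def p_def l_def)
    also have "\<dots> = W - p * W + p * W * exp (- \<eta> * l / p)"
      unfolding pW shift using False by (simp add: W_def exp3_weight_def coord_def)
    finally show ?thesis by (simp add: W_def algebra_simps)
  qed
qed

lemma exp3_potential_step:
  fixes \<eta> :: real and \<phi> :: "nat \<Rightarrow> real \<Rightarrow> real" and X :: "real \<times> real" and x :: "nat \<times> real"
  assumes "\<eta> > 0"
  defines "p \<equiv> exp3_prob \<eta> X (fst x)" and "l \<equiv> clip \<phi> (fst x) (snd x)"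
  shows "ln (exp3_weight \<eta> (estimate_update \<eta> \<phi> X x))
         \<le> ln (exp3_weight \<eta> X) - \<eta> * l + \<eta>^2 * l^2 / (2 * p)"
proof -
  define W where "W = exp3_weight \<eta> X"
  define z where "z = - \<eta> * l + \<eta>^2 * l^2 / (2 * p)"
  have W: "W > 0" unfolding W_def by (rule exp3_weight_pos)
  have p: "p > 0" unfolding p_def by (rule exp3_prob_pos)
  have y: "\<eta> * l / p \<ge> 0" unfolding l_def clip_def using assms(1) p by simp
  have "p * exp (- \<eta> * l / p) \<le> p * (1 - \<eta> * l / p + (\<eta> * l / p)^2 / 2)"
    using exp_neg_quadratic[OF y] p by (intro mult_left_mono) auto
  also have "\<dots> = p + z" unfolding z_def using p by (simp add: field_simps power2_eq_square)
  finally have "1 - p + p * exp (- \<eta> * l / p) \<le> 1 + z" by simp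
  then have le: "exp3_weight \<eta> (estimate_update \<eta> \<phi> X x) \<le> W * (1 + z)"
    unfolding exp3_weight_update p_def[symmetric] l_def[symmetric] W_def[symmetric]
    using W by (intro mult_left_mono) auto
  have "0 < W * (1 + z)" using le exp3_weight_pos by (rule order.strict_trans2[rotated])
  then have z: "1 + z > 0" using W by (rule zero_less_mult_pos)
  have "ln (exp3_weight \<eta> (estimate_update \<eta> \<phi> X x)) \<le> ln (W * (1 + z))"
    using le exp3_weight_pos by (rule ln_mono)
  also have "\<dots> = ln W + ln (1 + z)" using W z by (simp add: ln_mult)
  also have "\<dots> \<le> ln W + z" using ln_le_minus_one[OF z] by simp
  finally show ?thesis unfolding W_def z_def by simp
qed

lemma exp3_potential_path:
  assumes "\<eta> > 0"
  shows "ln (exp3_weight \<eta> (fst (exp3_state \<eta> \<phi> h)))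
         \<le> ln 2 - \<eta> * observed_loss \<phi> h + \<eta>^2 / 2 * snd (exp3_state \<eta> \<phi> h)"
proof (induction h rule: rev_induct)
  case Nil then show ?case by (simp add: exp3_state_def exp3_weight_def observed_loss_def)
next
  case (snoc x h)
  then show ?case
    using exp3_potential_step[OF assms, of \<phi> "fst (exp3_state \<eta> \<phi> h)" x]
    by (simp add: exp3_state_snoc observed_loss_def algebra_simps)
qed

text \<open>Pathwise bound: the observed loss exceeds either estimate by at most
  1/eta + eta/2 Q, since the weight is at least exp (- eta Xk).\<close>

lemma exp3_pathwise_bound:
  assumes "\<eta> > 0"
  shows "observed_loss \<phi> h
         \<le> coord k (fst (exp3_state \<eta> \<phi> h)) + 1 / \<eta> + \<eta> / 2 * snd (exp3_state \<eta> \<phi> h)"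
proof -
  let ?X = "fst (exp3_state \<eta> \<phi> h)"
  have "exp (- \<eta> * coord k ?X) \<le> exp3_weight \<eta> ?X"
    unfolding exp3_weight_def coord_def by simp
  then have "- \<eta> * coord k ?X \<le> ln (exp3_weight \<eta> ?X)"
    using exp3_weight_pos by (metis ln_exp ln_le_cancel_iff exp_gt_zero)
  moreover have "ln (2::real) \<le> 1" using ln_le_minus_one[of 2] by simp
  ultimately have "\<eta> * observed_loss \<phi> h
      \<le> \<eta> * (coord k ?X + 1 / \<eta> + \<eta> / 2 * snd (exp3_state \<eta> \<phi> h))"
    using exp3_potential_path[OF assms, of \<phi> h] assms
    by (simp add: algebra_simps power2_eq_square)
  then show ?thesis using assms by simp
qed

lemma exp3_expected_loss:
  assumes J: "valid_outcomes M J"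
    and Lrep: "\<forall>i<2. \<forall>j<M. L i j = \<phi> i (H i j) - c j"
    and nonneg: "\<forall>i<2. \<forall>j<M. 0 \<le> \<phi> i (H i j)"
  shows "E (hist H (exp3 \<eta> \<phi>) J T) (\<lambda>h. \<Sum>t<T. L (fst (h ! t)) (J t))
         = E (hist H (exp3 \<eta> \<phi>) J T) (observed_loss \<phi>) - (\<Sum>t<T. c (J t))"
proof -
  have "E (hist H (exp3 \<eta> \<phi>) J T) (\<lambda>h. \<Sum>t<T. L (fst (h ! t)) (J t))
        = E (hist H (exp3 \<eta> \<phi>) J T) (\<lambda>h. observed_loss \<phi> h - (\<Sum>t<T. c (J t)))"
  proof (rule expect_cong)
    fix h assume "h \<in> set_pmf (hist H (exp3 \<eta> \<phi>) J T)"
    then have len: "length h = T"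
      and hs: "\<forall>t<T. fst (h!t) < 2 \<and> snd (h!t) = H (fst (h!t)) (J t)"
      using valid_hist_support[OF exp3_valid] by blast+
    have "J t < M" for t using J unfolding valid_outcomes_def by blast
    then have "clip \<phi> (fst (h!t)) (snd (h!t)) = L (fst (h!t)) (J t) + c (J t)" if "t < T" for t
      using hs that Lrep nonneg unfolding clip_def by auto
    then have "observed_loss \<phi> h = (\<Sum>t<T. L (fst (h!t)) (J t) + c (J t))"
      unfolding observed_loss_def len[symmetric]
      by (simp add: sum_list_sum_nth atLeast0LessThan)
    then show "(\<Sum>t<T. L (fst (h ! t)) (J t)) = observed_loss \<phi> h - (\<Sum>t<T. c (J t))"
      by (simp add: sum.distrib)
  qed
  then show ?thesis by (simp add: expect_diff hist_finite[OF exp3_valid])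
qed

lemma exp3_expected_observed_loss:
  assumes "\<eta> > 0" "k < 2"
  shows "E (hist H (exp3 \<eta> \<phi>) J T) (observed_loss \<phi>)
         \<le> (\<Sum>t<T. clip \<phi> k (H k (J t))) + 1/\<eta>
           + \<eta>/2 * (\<Sum>t<T. (clip \<phi> 0 (H 0 (J t)))^2 + (clip \<phi> 1 (H 1 (J t)))^2)"
proof -
  let ?h = "hist H (exp3 \<eta> \<phi>) J T"
  have "E ?h (observed_loss \<phi>) \<le>
        E ?h (\<lambda>h. coord k (fst (exp3_state \<eta> \<phi> h)) + 1/\<eta> + \<eta>/2 * snd (exp3_state \<eta> \<phi> h))"
    by (rule expect_mono[OF hist_finite[OF exp3_valid]] exp3_pathwise_bound[OF assms(1)])+
  also have "\<dots> = (\<Sum>t<T. clip \<phi> k (H k (J t))) + 1/\<eta>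
           + \<eta>/2 * (\<Sum>t<T. (clip \<phi> 0 (H 0 (J t)))^2 + (clip \<phi> 1 (H 1 (J t)))^2)"
    by (simp add: expect_add hist_finite[OF exp3_valid] exp3_estimate_unbiased[OF assms(2)]
        exp3_second_moment)
  finally show ?thesis .
qed

lemma exp3_regret:
  assumes \<eta>: "\<eta> > 0" and J: "valid_outcomes M J"
    and Lrep: "\<forall>i<2. \<forall>j<M. L i j = \<phi> i (H i j) - c j"
    and \<phi>_bound: "\<forall>i<2. \<forall>j<M. 0 \<le> \<phi> i (H i j) \<and> \<phi> i (H i j) \<le> B"
  shows "regret 2 L H (exp3 \<eta> \<phi>) J T \<le> 1/\<eta> + \<eta> * T * B^2"
proof -
  let ?h = "hist H (exp3 \<eta> \<phi>) J T"
  define C where "C = (\<Sum>t<T. c (J t))"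
  define l where "l k = (\<Sum>t<T. clip \<phi> k (H k (J t)))" for k
  define Q where "Q = (\<Sum>t<T. (clip \<phi> 0 (H 0 (J t)))^2 + (clip \<phi> 1 (H 1 (J t)))^2)"
  have Jt: "J t < M" for t using J unfolding valid_outcomes_def by blast
  have nonneg: "\<forall>i<2. \<forall>j<M. 0 \<le> \<phi> i (H i j)" using \<phi>_bound by blast
  have clip_eq: "clip \<phi> i (H i (J t)) = \<phi> i (H i (J t))" if "i < 2" for i t
    using \<phi>_bound that Jt[of t] unfolding clip_def by auto
  have best: "(\<Sum>t<T. L k (J t)) = l k - C" if "k < 2" for k
  proof -
    have "(\<Sum>t<T. L k (J t)) = (\<Sum>t<T. clip \<phi> k (H k (J t)) - c (J t))"
      using Lrep that Jt clip_eq by (intro sum.cong) auto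
    then show ?thesis unfolding l_def C_def by (simp add: sum_subtractf)
  qed
  have observed: "E ?h (observed_loss \<phi>) \<le> l k + 1/\<eta> + \<eta>/2 * Q" if "k < 2" for k
    unfolding l_def Q_def by (rule exp3_expected_observed_loss[OF \<eta> that])
  have sq: "(clip \<phi> i (H i (J t)))^2 \<le> B^2" if "i < 2" for i t
    using \<phi>_bound that Jt[of t] clip_eq[OF that, of t] by (auto intro: power_mono)
  have "Q \<le> (\<Sum>t<T. 2 * B^2)"
    unfolding Q_def
  proof (rule sum_mono)
    fix t show "(clip \<phi> 0 (H 0 (J t)))^2 + (clip \<phi> 1 (H 1 (J t)))^2 \<le> 2 * B^2"
      using sq[of 0 t] sq[of 1 t] by simp
  qed
  then have "\<eta>/2 * Q \<le> \<eta> * T * B^2" using \<eta> by (simp add: mult_left_mono)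
  moreover have "regret 2 L H (exp3 \<eta> \<phi>) J T = E ?h (observed_loss \<phi>) - C - min (l 0 - C) (l 1 - C)"
    using \<phi>_bound best[of 0] best[of 1]
    unfolding regret_def Min_two exp3_expected_loss[where \<phi>=\<phi> and H=H and c=c, OF J Lrep nonneg] C_def by simp
  ultimately show ?thesis using observed[of 0] observed[of 1] by (simp add: min_def)
qed

lemma exp3_minimax_upper:
  assumes M: "M \<ge> 1" and Lb: "loss_bounded M L"
    and Lrep: "\<forall>i<2. \<forall>j<M. L i j = \<phi> i (H i j) - c j"
    and \<phi>_bound: "\<forall>i<2. \<forall>j<M. 0 \<le> \<phi> i (H i j) \<and> \<phi> i (H i j) \<le> B"
    and B: "B > 0" and T: "T \<ge> 1"
  shows "minimax_regret 2 M L H T \<le> 2 * B * sqrt T"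
proof -
  define \<eta> where "\<eta> = 1 / (B * sqrt T)"
  have sqrtT: "sqrt T > 0" using T by simp
  have \<eta>: "\<eta> > 0" unfolding \<eta>_def using B sqrtT by simp
  have "\<eta> * T * B^2 = B * sqrt T"
    unfolding \<eta>_def using B sqrtT real_sqrt_mult_self[of T]
    by (simp add: field_simps power2_eq_square)
  moreover have "1/\<eta> = B * sqrt T" unfolding \<eta>_def by simp
  ultimately have tuned: "1/\<eta> + \<eta> * T * B^2 = 2 * B * sqrt T" by simp
  have "valid_outcomes M (\<lambda>_. 0)" using M unfolding valid_outcomes_def by simp
  then have "worst_regret M L H T (exp3 \<eta> \<phi>) \<le> 2 * B * sqrt T"
  proof (intro cSup_least)
    fix x assume "x \<in> (\<lambda>J. regret 2 L H (exp3 \<eta> \<phi>) J T) ` {J. valid_outcomes M J}"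
    then obtain J where J: "valid_outcomes M J" and x: "x = regret 2 L H (exp3 \<eta> \<phi>) J T" by blast
    show "x \<le> 2 * B * sqrt T"
      unfolding x tuned[symmetric]
      by (rule exp3_regret[where \<phi>=\<phi> and H=H and c=c and B=B, OF \<eta> J Lrep \<phi>_bound])
  qed blast
  then show ?thesis using minimax_regret_le_worst[OF exp3_valid Lb M] by (rule order_trans[rotated])
qed

section \<open>Part (4): the lower bound of order sqrt T\<close>

text \<open>A lower bound on the first absolute moment from the second and fourth moments:
  pointwise, x^2 <= a |x| + x^4 / a^2 for every a > 0.\<close>

lemma square_le_abs_plus_fourth:
  assumes a: "(a::real) > 0"
  shows "x^2 \<le> a * \<bar>x\<bar> + x^4 / a^2"
proof (cases "\<bar>x\<bar> \<le> a")
  case True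
  have "x^2 = \<bar>x\<bar> * \<bar>x\<bar>" by (simp add: power2_eq_square)
  also have "\<dots> \<le> a * \<bar>x\<bar>" by (rule mult_right_mono) (use True in auto)
  finally show ?thesis by (simp add: add_increasing2)
next
  case False
  have "a^2 \<le> \<bar>x\<bar>^2" by (rule power_mono) (use False a in auto)
  then have "a^2 \<le> x^2" by simp
  then have "x^2 * a^2 \<le> x^2 * x^2" by (rule mult_left_mono) auto
  then have "x^2 \<le> x^4 / a^2" using a by (simp add: pos_le_divide_eq power4_eq_xxxx power2_eq_square)
  then show ?thesis using a by (simp add: add_increasing)
qed

lemma second_moment_le:
  assumes "finite (set_pmf p)" "(a::real) > 0"
  shows "E p (\<lambda>x. (X x)^2) \<le> a * E p (\<lambda>x. \<bar>X x\<bar>) + E p (\<lambda>x. (X x)^4) / a^2"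
proof -
  have "E p (\<lambda>x. (X x)^2) \<le> E p (\<lambda>x. a * \<bar>X x\<bar> + (X x)^4 / a^2)"
    by (rule expect_mono[OF assms(1)]) (rule square_le_abs_plus_fourth[OF assms(2)])
  also have "\<dots> = a * E p (\<lambda>x. \<bar>X x\<bar>) + E p (\<lambda>x. (X x)^4) / a^2"
    by (simp add: expect_add assms(1))
  finally show ?thesis .
qed

text \<open>Fix outcomes j1, j2 on which the gap L 0 - L 1 has opposite signs, and mix them so
  that the gap has mean zero.\<close>

locale opposite_gaps =
  fixes L :: "nat \<Rightarrow> nat \<Rightarrow> real" and j1 j2 :: nat
  assumes pos_gap: "L 0 j1 - L 1 j1 > 0" and neg_gap: "L 0 j2 - L 1 j2 < 0"
begin

definition "gap j = L 0 j - L 1 j"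
definition "mix = - gap j2 / (gap j1 - gap j2)"
definition "q = two_point mix j1 j2"
definition "var = mix * (gap j1)^2 + (1 - mix) * (gap j2)^2"
definition "m3 = mix * (gap j1)^3 + (1 - mix) * (gap j2)^3"
definition "m4 = mix * (gap j1)^4 + (1 - mix) * (gap j2)^4"
definition "K = m4 + 3 * var^2"
definition "D xs = sum_list (map gap xs)"
definition "rate = var / (4 * (2 * K / var + 1))"

lemma mix: "0 < mix" "mix < 1"
  using pos_gap neg_gap by (auto simp: mix_def gap_def field_simps)

lemma mean_gap_zero: "mix * gap j1 + (1 - mix) * gap j2 = 0"
  using pos_gap neg_gap by (simp add: mix_def gap_def field_simps)

lemma q_expect: "E q g = mix * g j1 + (1 - mix) * g j2"
  unfolding q_def using mix by (intro two_point_expect) auto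

lemma q_finite: "finite (set_pmf q)"
  unfolding q_def by (rule two_point_finite)

lemma var_pos: "var > 0"
proof -
  have "mix * (gap j1)^2 > 0" using mix pos_gap by (simp add: gap_def)
  moreover have "(1 - mix) * (gap j2)^2 \<ge> 0" using mix by simp
  ultimately show ?thesis unfolding var_def by linarith
qed

lemma m4_nonneg: "m4 \<ge> 0"
  unfolding m4_def using mix by (intro add_nonneg_nonneg mult_nonneg_nonneg) auto

lemma K_pos: "K > 0"
  unfolding K_def using m4_nonneg var_pos by (simp add: add_nonneg_pos)

lemma rate_pos: "rate > 0"
  unfolding rate_def using var_pos K_pos by (simp add: add_pos_pos)

lemma walk_step:
  "E (iid_seq q (Suc T)) F = E (iid_seq q T) (\<lambda>xs. mix * F (xs @ [j1]) + (1 - mix) * F (xs @ [j2]))"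
  by (subst iid_seq_expect_Suc[OF q_finite]) (simp add: q_expect)

lemma walk_finite: "finite (set_pmf (iid_seq q T))"
  by (rule iid_seq_finite[OF q_finite])

lemma D_snoc: "D (xs @ [j]) = D xs + gap j"
  by (simp add: D_def)

lemma walk_mean: "E (iid_seq q T) D = 0"
proof (induction T)
  case 0 then show ?case by (simp add: D_def)
next
  case (Suc T)
  have "E (iid_seq q (Suc T)) D = E (iid_seq q T) (\<lambda>xs. D xs + (mix * gap j1 + (1 - mix) * gap j2))"
    unfolding walk_step D_snoc by (rule expect_cong) (simp add: algebra_simps)
  then show ?case using Suc by (simp add: mean_gap_zero)
qed

lemma walk_second_moment: "E (iid_seq q T) (\<lambda>xs. (D xs)^2) = T * var"
proof (induction T)
  case 0 then show ?case by (simp add: D_def)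
next
  case (Suc T)
  have "mix * (x + gap j1)^2 + (1 - mix) * (x + gap j2)^2
        = x^2 + 2 * (mix * gap j1 + (1 - mix) * gap j2) * x + var" for x
    unfolding var_def by algebra
  then have "E (iid_seq q (Suc T)) (\<lambda>xs. (D xs)^2) = E (iid_seq q T) (\<lambda>xs. (D xs)^2 + var)"
    unfolding walk_step D_snoc mean_gap_zero by simp
  also have "\<dots> = E (iid_seq q T) (\<lambda>xs. (D xs)^2) + var" by (simp add: expect_add walk_finite)
  finally show ?case using Suc by (simp add: algebra_simps)
qed

lemma walk_fourth_moment: "E (iid_seq q T) (\<lambda>xs. (D xs)^4) \<le> K * T^2"
proof (induction T)
  case 0 then show ?case by (simp add: D_def)
next
  case (Suc T)
  have "mix * (x + gap j1)^4 + (1 - mix) * (x + gap j2)^4 =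
        x^4 + 4 * (mix * gap j1 + (1 - mix) * gap j2) * x^3 + 6 * var * x^2 + 4 * m3 * x + m4" for x
    unfolding var_def m3_def m4_def by algebra
  then have "E (iid_seq q (Suc T)) (\<lambda>xs. (D xs)^4)
             = E (iid_seq q T) (\<lambda>xs. (D xs)^4 + 6 * var * (D xs)^2 + 4 * m3 * D xs + m4)"
    unfolding walk_step D_snoc mean_gap_zero by simp
  also have "\<dots> = E (iid_seq q T) (\<lambda>xs. (D xs)^4) + 6 * var * (T * var) + m4"
    by (simp add: expect_add walk_finite walk_mean walk_second_moment)
  also have "\<dots> = E (iid_seq q T) (\<lambda>xs. (D xs)^4) + 6 * var^2 * T + m4"
    by (simp add: power2_eq_square)
  also have "\<dots> \<le> K * T^2 + 6 * var^2 * T + m4" using Suc by simp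
  also have "\<dots> \<le> K * (Suc T)^2"
  proof -
    have "6 * var^2 * T \<le> 2 * K * T" unfolding K_def using m4_nonneg by (simp add: mult_right_mono)
    moreover have "m4 \<le> K" unfolding K_def by simp
    ultimately show ?thesis by (simp add: power2_eq_square algebra_simps)
  qed
  finally show ?case .
qed

lemma walk_abs_mean:
  assumes "T \<ge> 1"
  shows "2 * rate * sqrt T \<le> E (iid_seq q T) (\<lambda>xs. \<bar>D xs\<bar>)"
proof -
  define c where "c = 2 * K / var + 1"
  have c: "c \<ge> 1" "2 * K / var \<le> c" unfolding c_def using K_pos var_pos by auto
  have "c * 1 \<le> c * c" using c(1) by (intro mult_left_mono) auto
  then have c2: "2 * K / var \<le> c^2" using c(2) by (simp add: power2_eq_square)
  define a where "a = c * sqrt T"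
  have sqrtT: "sqrt T > 0" using assms by simp
  have a: "a > 0" unfolding a_def using c sqrtT by simp
  have a2: "a^2 = c^2 * T" unfolding a_def by (simp add: power_mult_distrib)
  have "K * T^2 / a^2 = K / c^2 * T" unfolding a2 using assms by (simp add: power2_eq_square)
  also have "\<dots> \<le> var / 2 * T"
    using c2 var_pos c by (intro mult_right_mono) (auto simp: field_simps)
  finally have "K * T^2 / a^2 \<le> var / 2 * T" .
  moreover have "E (iid_seq q T) (\<lambda>xs. (D xs)^4) / a^2 \<le> K * T^2 / a^2"
    by (rule divide_right_mono[OF walk_fourth_moment]) simp
  ultimately have fourth: "E (iid_seq q T) (\<lambda>xs. (D xs)^4) / a^2 \<le> var / 2 * T" by linarith
  have "T * var \<le> a * E (iid_seq q T) (\<lambda>xs. \<bar>D xs\<bar>) + E (iid_seq q T) (\<lambda>xs. (D xs)^4) / a^2"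
    using second_moment_le[OF walk_finite a, of T D] by (simp add: walk_second_moment)
  then have "var / 2 * T \<le> E (iid_seq q T) (\<lambda>xs. \<bar>D xs\<bar>) * a"
    using fourth by (simp add: algebra_simps)
  then have "var / 2 * T / a \<le> E (iid_seq q T) (\<lambda>xs. \<bar>D xs\<bar>)"
    using a by (simp add: pos_divide_le_eq)
  moreover have "var / 2 * T / a = var / (2 * c) * sqrt T"
    unfolding a_def using sqrtT c real_sqrt_mult_self[of T] by (simp add: field_simps)
  ultimately show ?thesis unfolding rate_def c_def[symmetric] by simp
qed

text \<open>Against i.i.d. outcomes from q both actions have the same mean loss, so every
  strategy has expected regret exactly E |D| / 2.\<close>

lemma expected_regret_walk:
  assumes "valid_strategy 2 \<sigma>"
  shows "E (iid_seq q T) (\<lambda>xs. regret 2 L H \<sigma> (outcome_fun xs) T)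
         = E (iid_seq q T) (\<lambda>xs. \<bar>D xs\<bar>) / 2"
proof -
  define \<mu> where "\<mu> = E q (L 1)"
  have same_mean: "E q (L 0) = \<mu>"
    unfolding \<mu>_def q_expect using mean_gap_zero by (simp add: gap_def algebra_simps)
  have "min (sum_list (map (L 0) xs)) (sum_list (map (L 1) xs))
        = sum_list (map (L 1) xs) + D xs / 2 - \<bar>D xs\<bar> / 2" for xs
  proof -
    have "sum_list (map (L 0) xs) = sum_list (map (L 1) xs) + D xs"
      unfolding D_def gap_def by (induction xs) auto
    then show ?thesis by (simp add: min_def abs_if)
  qed
  then have "E (iid_seq q T) (\<lambda>xs. min (sum_list (map (L 0) xs)) (sum_list (map (L 1) xs)))
        = E (iid_seq q T) (\<lambda>xs. sum_list (map (L 1) xs)) + E (iid_seq q T) D / 2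
          - E (iid_seq q T) (\<lambda>xs. \<bar>D xs\<bar>) / 2"
    by (simp add: expect_add expect_diff walk_finite)
  also have "\<dots> = T * \<mu> - E (iid_seq q T) (\<lambda>xs. \<bar>D xs\<bar>) / 2"
    by (simp add: walk_mean expect_iid_sum[OF q_finite] \<mu>_def)
  finally show ?thesis
    unfolding expected_regret_iid[OF assms q_finite] same_mean \<mu>_def[symmetric] by simp
qed

lemma minimax_sqrt_lower:
  assumes "M \<ge> 1" "loss_bounded M L" "j1 < M" "j2 < M" "T \<ge> 1"
  shows "rate * sqrt T \<le> minimax_regret 2 M L H T"
proof (rule le_minimax_regretI)
  fix \<sigma> assume \<sigma>: "valid_strategy 2 \<sigma>"
  have "set_pmf q \<subseteq> {..<M}" unfolding q_def using two_point_support assms(3,4) by blast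
  then have "E (iid_seq q T) (\<lambda>xs. regret 2 L H \<sigma> (outcome_fun xs) T) \<le> worst_regret M L H T \<sigma>"
    by (rule expected_regret_le_worst[OF \<sigma> q_finite _ assms(1,2)])
  then have "E (iid_seq q T) (\<lambda>xs. \<bar>D xs\<bar>) / 2 \<le> worst_regret M L H T \<sigma>"
    unfolding expected_regret_walk[OF \<sigma>] .
  moreover have "rate * sqrt T \<le> E (iid_seq q T) (\<lambda>xs. \<bar>D xs\<bar>) / 2"
    using walk_abs_mean[OF assms(5)] by simp
  ultimately show "rate * sqrt T \<le> worst_regret M L H T \<sigma>" by (rule order_trans[rotated])
qed

end

theorem theorem3:
  fixes M :: nat and L0 H0 :: "nat \<Rightarrow> nat \<Rightarrow> real"
  assumes "M \<ge> 1"
    and "\<forall>i<2. \<forall>j<M. 0 \<le> L0 i j \<and> L0 i j \<le> 1"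
    and "\<not> trivial_game 2 M L0 H0"
  shows "(\<exists>L' :: nat \<Rightarrow> nat \<Rightarrow> real. easier 2 M L0 H0 L' L')
       \<and> (\<exists>c C :: real. 0 < c \<and> c \<le> C \<and>
            (\<forall>T::nat. T \<ge> 1 \<longrightarrow>
               c * sqrt (real T) \<le> minimax_regret 2 M L0 H0 T
               \<and> minimax_regret 2 M L0 H0 T \<le> C * sqrt (real T)))"
proof -
  note M = assms(1) and Lb = assms(2)
  obtain f g where "\<forall>j<M. L0 0 j - L0 1 j = f (H0 0 j) + g (H0 1 j)"
    using nontrivial_gap_observable[OF assms] by blast
  then obtain \<phi> c B where B: "B > 0" and Lrep: "\<forall>i<2. \<forall>j<M. L0 i j = \<phi> i (H0 i j) - c j"
    and \<phi>_bound: "\<forall>i<2. \<forall>j<M. 0 \<le> \<phi> i (H0 i j) \<and> \<phi> i (H0 i j) \<le> B"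
    using observable_bandit_representation by blast
  have bandit: "easier 2 M L0 H0 (\<lambda>i j. \<phi> i (H0 i j)) (\<lambda>i j. \<phi> i (H0 i j))"
    by (rule bandit_harder[where \<phi>=\<phi> and H=H0 and c=c, OF Lrep])
  obtain j1 j2 where j1: "j1 < M" "L0 0 j1 - L0 1 j1 > 0" and j2: "j2 < M" "L0 0 j2 - L0 1 j2 < 0"
    using nontrivial_gap_signs[OF assms] by blast
  interpret opposite_gaps L0 j1 j2 using j1 j2 by unfold_locales
  have "rate * sqrt T \<le> minimax_regret 2 M L0 H0 T
        \<and> minimax_regret 2 M L0 H0 T \<le> max (2 * B) rate * sqrt T" if T: "T \<ge> 1" for T
  proof
    show "rate * sqrt T \<le> minimax_regret 2 M L0 H0 T"
      by (rule minimax_sqrt_lower[OF M Lb j1(1) j2(1) T])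
    have "minimax_regret 2 M L0 H0 T \<le> 2 * B * sqrt T"
      by (rule exp3_minimax_upper[where \<phi>=\<phi> and c=c, OF M Lb Lrep \<phi>_bound B T])
    also have "\<dots> \<le> max (2 * B) rate * sqrt T" by (intro mult_right_mono) auto
    finally show "minimax_regret 2 M L0 H0 T \<le> max (2 * B) rate * sqrt T" .
  qed
  then show ?thesis using bandit rate_pos by (intro conjI exI[of _ rate] exI[of _ "max (2 * B) rate"]) auto
qed

end
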